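(* Let $\mathrm{OP}_n=\mathbb{C}[\partial\mathbf{x},E_1,\dots,E_{n-1}]\,\Delta(\mathbf{x})$. A polynomial $f(\mathbf{x},\mathbf{y})\in\mathbb{C}[\mathbf{x},\mathbf{y}]$ lies in $\mathrm{OP}_n^{\perp}$ if and only if $$f(\mathbf{x},\phi_\lambda(\mathbf{x}))\in(e_1(\mathbf{x}),\dots,e_n(\mathbf{x}))$$ identically in $\lambda$, i.e. in the ideal generated by $e_1(\mathbf{x}),\dots,e_n(\mathbf{x})$ in $\mathbb{C}[\mathbf{x},\lambda_1,\dots,\lambda_{n-1}]$, where $\phi_\lambda(z)=\lambda_{n-1}z^{n-1}+\cdots+\lambda_1z$ and $f(\mathbf{x},\phi_\lambda(\mathbf{x}))$ means $f$ with each $y_j$ replaced by $\phi_\lambda(x_j)$.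
   Context: $\mathbb{C}[\mathbf{x},\mathbf{y}]=\mathbb{C}[x_1,\dots,x_n,y_1,\dots,y_n]$; $E_k=\sum_{i=1}^n y_i\,\partial x_i^{\,k}$; $\Delta(\mathbf{x})=\prod_{i<j}(x_i-x_j)$; $e_i(\mathbf{x})$ is the $i$-th elementary symmetric polynomial; $\lambda_1,\dots,\lambda_{n-1}$ are indeterminates. The inner product on $\mathbb{C}[\mathbf{x},\mathbf{y}]$ is $(f,g)=\bigl(g(\partial\mathbf{x},\partial\mathbf{y})f(\mathbf{x},\mathbf{y})\bigr)|_{\mathbf{x},\mathbf{y}\mapsto 0}$, and $\perp$ denotes orthogonal complement with respect to it. *)

theory Defs
  imports Complex_Main "HOL-Library.Poly_Mapping"
begin

text \<open>Variables: X i = x_i, Y i = y_i (1 \<le> i \<le> n), Lam k = lambda_k (1 \<le> k \<le> n-1).\<close>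

datatype var = X nat | Y nat | Lam nat

type_synonym mpoly = "(var \<Rightarrow>\<^sub>0 nat) \<Rightarrow>\<^sub>0 complex"

definition const :: "complex \<Rightarrow> mpoly" where
  "const c = Poly_Mapping.single 0 c"

definition pvar :: "var \<Rightarrow> mpoly" where
  "pvar v = Poly_Mapping.single (Poly_Mapping.single v 1) 1"

definition poly_in :: "var set \<Rightarrow> mpoly \<Rightarrow> bool" where
  "poly_in V p \<longleftrightarrow> (\<forall>m\<in>Poly_Mapping.keys (p::mpoly). Poly_Mapping.keys (m::var \<Rightarrow>\<^sub>0 nat) \<subseteq> V)"

definition xy_vars :: "nat \<Rightarrow> var set" where
  "xy_vars n = X ` {1..n} \<union> Y ` {1..n}"

definition xlam_vars :: "nat \<Rightarrow> var set" where
  "xlam_vars n = X ` {1..n} \<union> Lam ` {1..n-1}"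

definition mderiv :: "(var \<Rightarrow>\<^sub>0 nat) \<Rightarrow> mpoly \<Rightarrow> mpoly" where
  "mderiv m p = (\<Sum>a\<in>Poly_Mapping.keys p. Poly_Mapping.single (a - m)
       (Poly_Mapping.lookup p a * (\<Prod>v\<in>Poly_Mapping.keys m. \<Prod>t<Poly_Mapping.lookup m v. of_nat (Poly_Mapping.lookup a v - t))))"

definition pd :: "var \<Rightarrow> mpoly \<Rightarrow> mpoly" where
  "pd v = mderiv (Poly_Mapping.single v 1)"

definition Eop :: "nat \<Rightarrow> nat \<Rightarrow> mpoly \<Rightarrow> mpoly" where
  "Eop n k p = (\<Sum>i=1..n. pvar (Y i) * (pd (X i) ^^ k) p)"

definition Vandermonde :: "nat \<Rightarrow> mpoly" where
  "Vandermonde n = (\<Prod>(i,j)\<in>{(i,j). 1 \<le> i \<and> i < j \<and> j \<le> n}. pvar (X i) - pvar (X j))"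

definition esym :: "nat \<Rightarrow> nat \<Rightarrow> mpoly" where
  "esym n i = (\<Sum>S\<in>{S. S \<subseteq> {1..n} \<and> card S = i}. \<Prod>j\<in>S. pvar (X j))"

text \<open>\<open>OP_n = \<complex>[\<partial>x, E_1,\<dots>,E_{n-1}] \<Delta>(x)\<close>: the smallest complex subspace
  containing \<open>\<Delta>\<close> and stable under all \<open>\<partial>x_i\<close> and \<open>E_k\<close>.\<close>
inductive_set OP :: "nat \<Rightarrow> mpoly set" for n where
  OP_Delta: "Vandermonde n \<in> OP n"
| OP_zero: "0 \<in> OP n"
| OP_add: "p \<in> OP n \<Longrightarrow> q \<in> OP n \<Longrightarrow> p + q \<in> OP n"
| OP_smult: "p \<in> OP n \<Longrightarrow> const c * p \<in> OP n"
| OP_dx: "p \<in> OP n \<Longrightarrow> i \<in> {1..n} \<Longrightarrow> pd (X i) p \<in> OP n"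
| OP_E: "p \<in> OP n \<Longrightarrow> k \<in> {1..n-1} \<Longrightarrow> Eop n k p \<in> OP n"

text \<open>Differential operator \<open>g(\<partial>)\<close> applied to f, and the pairing
  \<open>(f,g) = (g(\<partial>) f)|_{0}\<close>.\<close>
definition apply_diff :: "mpoly \<Rightarrow> mpoly \<Rightarrow> mpoly" where
  "apply_diff g f = (\<Sum>m\<in>Poly_Mapping.keys g. const (Poly_Mapping.lookup g m) * mderiv m f)"

definition pair :: "mpoly \<Rightarrow> mpoly \<Rightarrow> complex" where
  "pair f g = Poly_Mapping.lookup (apply_diff g f) 0"

definition orth :: "mpoly set \<Rightarrow> mpoly set" where
  "orth S = {f. \<forall>g\<in>S. pair f g = 0}"

definition subst :: "(var \<Rightarrow> mpoly) \<Rightarrow> mpoly \<Rightarrow> mpoly" where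
  "subst \<sigma> p = (\<Sum>a\<in>Poly_Mapping.keys p. const (Poly_Mapping.lookup p a) * (\<Prod>v\<in>Poly_Mapping.keys a. \<sigma> v ^ Poly_Mapping.lookup a v))"

definition phi :: "nat \<Rightarrow> mpoly \<Rightarrow> mpoly" where
  "phi n z = (\<Sum>k=1..n-1. pvar (Lam k) * z ^ k)"

definition phi_subst :: "nat \<Rightarrow> var \<Rightarrow> mpoly" where
  "phi_subst n v = (case v of Y j \<Rightarrow> phi n (pvar (X j)) | _ \<Rightarrow> pvar v)"

definition in_esym_ideal :: "nat \<Rightarrow> mpoly \<Rightarrow> bool" where
  "in_esym_ideal n p \<longleftrightarrow>
     (\<exists>q. (\<forall>i\<in>{1..n}. poly_in (xlam_vars n) (q i)) \<and> p = (\<Sum>i=1..n. q i * esym n i))"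

end

(*
  The pairing is Fischer's inner product: distinct monomials are orthogonal and
  (x^a, x^a) = a!, so multiplication by a variable is adjoint to differentiation by it and
  E_k is adjoint to F_k = sum_i x_i^k d/dy_i.  Write Phi h = h(x, phi_lambda(x)).  The chain
  rule d/dlambda_k (Phi h) = Phi (F_k h), together with (h, Delta) = (Phi h, Delta), shows that
  f is orthogonal to OP_n iff Phi f is orthogonal to W_n, the C[dx, lambda]-module generated
  by Delta.  It remains to show that a polynomial G in x and lambda lies in the ideal
  J = (e_1, ..., e_n) iff G is orthogonal to W_n.

  J is orthogonal to W_n because (q e_i, Delta) = 0: on monomials q = x^a this pairing changes
  sign under adjacent transpositions of the x's, so it vanishes when two exponents of x^a
  coincide, and for degree reasons this is the only case in which it can be nonzero.

  Conversely, since h_m(x_1, ..., x_k) lies in J for m > n - k, every G is congruent modulo J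
  to some r supported on the Artin monomials x^a lambda^b with a_j <= n - j.  If r is nonzero,
  let x^a lambda^b be its monomial with largest x-exponent in reverse lexicographic order.
  As x^delta with delta = (n-1, ..., 1, 0) is the least term of Delta, the element
  lambda^b (dx)^(delta - a) Delta of W_n pairs with r to a nonzero multiple of the coefficient
  of x^a lambda^b.
*)
theory Submission
  imports Defs "HOL-Computational_Algebra.Formal_Power_Series" "HOL-Combinatorics.Transposition"
begin

abbreviation lookup where "lookup \<equiv> Poly_Mapping.lookup"
abbreviation keys where "keys \<equiv> Poly_Mapping.keys"
abbreviation single where "single \<equiv> Poly_Mapping.single"

section \<open>Polynomials as finitely supported maps\<close>

definition var_exp :: "'v \<Rightarrow> ('v \<Rightarrow>\<^sub>0 nat)" where
  "var_exp v = single v 1"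

lemma lookup_var_exp: "lookup (var_exp v) w = (if v = w then 1 else 0)"
  by (simp add: var_exp_def lookup_single)

lemma sum_single_lookup: "(\<Sum>a\<in>keys p. single a (lookup p a)) = p"
proof (rule poly_mapping_eqI)
  fix k
  show "lookup (\<Sum>a\<in>keys p. single a (lookup p a)) k = lookup p k"
    by (cases "k \<in> keys p") (auto simp: lookup_sum lookup_single when_def in_keys_iff)
qed

lemma poly_mapping_induct_keys:
  fixes p :: "'a \<Rightarrow>\<^sub>0 'b::comm_monoid_add"
  assumes "P 0" and "\<And>a c. Q a \<Longrightarrow> P (single a c)" and "\<And>p q. P p \<Longrightarrow> P q \<Longrightarrow> P (p + q)"
    and "\<forall>a\<in>keys p. Q a"
  shows "P p"
proof -
  have "finite A \<Longrightarrow> \<forall>a\<in>A. Q a \<Longrightarrow> P (\<Sum>a\<in>A. single a (lookup p a))" for A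
    by (induction A rule: finite_induct) (auto intro: assms)
  from this[of "keys p"] assms(4) show ?thesis by (simp add: sum_single_lookup)
qed

lemma poly_mapping_induct:
  fixes p :: "'a \<Rightarrow>\<^sub>0 'b::comm_monoid_add"
  assumes "P 0" and "\<And>a c. P (single a c)" and "\<And>p q. P p \<Longrightarrow> P q \<Longrightarrow> P (p + q)"
  shows "P p"
  using poly_mapping_induct_keys[of P "\<lambda>_. True"] assms by auto

lemma bilinear_eqI:
  fixes L R :: "('a \<Rightarrow>\<^sub>0 'b::comm_monoid_add) \<Rightarrow> ('c \<Rightarrow>\<^sub>0 'd::comm_monoid_add)
    \<Rightarrow> 'e::cancel_comm_monoid_add"
  assumes "\<And>f f' g. L (f + f') g = L f g + L f' g" and "\<And>f g g'. L f (g + g') = L f g + L f g'"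
    and "\<And>f f' g. R (f + f') g = R f g + R f' g" and "\<And>f g g'. R f (g + g') = R f g + R f g'"
    and "\<And>a c b d. L (single a c) (single b d) = R (single a c) (single b d)"
  shows "L f g = R f g"
proof -
  have zero: "L 0 g = 0" "L f 0 = 0" "R 0 g = 0" "R f 0 = 0" for f g
    using assms(1)[of 0 0 g] assms(2)[of f 0 0] assms(3)[of 0 0 g] assms(4)[of f 0 0] by simp_all
  have "L (single a c) g = R (single a c) g" for a c
    by (induction g rule: poly_mapping_induct) (auto simp: zero assms)
  then show ?thesis
    by (induction f rule: poly_mapping_induct) (auto simp: zero assms)
qed

lemma lookup_const_mult: "lookup (const c * p) a = c * lookup p a"
proof -
  have "const c * p = Poly_Mapping.map ((*) c) p"
    by (simp add: const_def mult_map_scale_conv_mult)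
  then show ?thesis by (simp add: Poly_Mapping.map.rep_eq when_def)
qed

lemma const_mult_single: "const c * single a d = single a (c * d)"
  by (simp add: const_def mult_single)

lemma const_0 [simp]: "const 0 = 0"
  by (simp add: const_def)

lemma const_1 [simp]: "const 1 = 1"
  by (simp add: const_def)

lemma const_add: "const (c + d) = const c + const d"
  by (simp add: const_def single_add)

lemma const_mult: "const (c * d) = const c * const d"
  by (simp add: const_def mult_single)

lemma pvar_eq_single: "pvar v = single (var_exp v) 1"
  by (simp add: pvar_def var_exp_def)

lemma single_add_var_exp: "single (a + var_exp v) c = single a c * pvar v"
  by (simp add: pvar_eq_single mult_single)

lemma pvar_power: "pvar v ^ d = single (single v d) 1"
  by (induction d) (simp_all add: pvar_eq_single mult_single var_exp_def single_add[symmetric])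

lemma keys_add_exp: "keys a \<subseteq> keys (a + b :: 'v \<Rightarrow>\<^sub>0 nat)"
  by (auto simp: in_keys_iff lookup_add)

lemma var_exp_minus_cancel: "(a + var_exp v) - var_exp v = a"
  by (rule poly_mapping_eqI) (simp add: lookup_minus lookup_add lookup_var_exp)

lemma minus_var_exp_add:
  "lookup a v > 0 \<Longrightarrow> (a - var_exp v) + b = (a + b) - var_exp v"
  by (rule poly_mapping_eqI) (auto simp: lookup_minus lookup_add lookup_var_exp)

lemma minus_var_exp_add_cancel: "lookup a v > 0 \<Longrightarrow> (a - var_exp v) + var_exp v = a"
  using minus_var_exp_add[of a v "var_exp v"] by (simp add: var_exp_minus_cancel)

definition exp_deg :: "('v \<Rightarrow>\<^sub>0 nat) \<Rightarrow> nat" where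
  "exp_deg a = (\<Sum>v\<in>keys a. lookup a v)"

lemma exp_deg_superset: "finite K \<Longrightarrow> keys a \<subseteq> K \<Longrightarrow> exp_deg a = (\<Sum>v\<in>K. lookup a v)"
  unfolding exp_deg_def by (rule sum.mono_neutral_left) (auto simp: in_keys_iff)

lemma exp_deg_add: "exp_deg (a + b) = exp_deg a + exp_deg b"
proof -
  have "exp_deg (a + b) = (\<Sum>v\<in>keys a \<union> keys b. lookup (a + b) v)"
    by (rule exp_deg_superset) (use keys_add[of a b] in auto)
  then show ?thesis by (simp add: lookup_add sum.distrib exp_deg_superset[symmetric])
qed

lemma exp_deg_var_exp [simp]: "exp_deg (var_exp v) = 1"
  by (simp add: exp_deg_def var_exp_def)

lemma exp_induct [consumes 1, case_names zero add_var]: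
  assumes "keys a \<subseteq> V" and "P 0"
    and "\<And>a v. P a \<Longrightarrow> v \<in> V \<Longrightarrow> keys a \<subseteq> V \<Longrightarrow> P (a + var_exp v)"
  shows "P a"
  using assms(1)
proof (induction "exp_deg a" arbitrary: a rule: less_induct)
  case less
  show ?case
  proof (cases "a = 0")
    case True then show ?thesis using assms(2) by simp
  next
    case False
    then obtain v where v: "v \<in> keys a" by (metis keys_eq_empty ex_in_conv)
    then have a: "a = (a - var_exp v) + var_exp v"
      by (simp add: minus_var_exp_add_cancel in_keys_iff)
    have keys_diff: "keys (a - var_exp v) \<subseteq> keys a"
      by (auto simp: in_keys_iff lookup_minus)
    have "exp_deg (a - var_exp v) < exp_deg a"
      using arg_cong[OF a, of exp_deg] by (simp add: exp_deg_add)
    then have "P (a - var_exp v)" using less keys_diff by auto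
    then have "P ((a - var_exp v) + var_exp v)"
      using assms(3) v keys_diff less.prems by blast
    then show ?thesis using a by simp
  qed
qed

lemma poly_in_add: "poly_in V p \<Longrightarrow> poly_in V q \<Longrightarrow> poly_in V (p + q)"
  unfolding poly_in_def using keys_add[of p q] by auto

lemma poly_in_mult:
  assumes "poly_in V p" and "poly_in V q"
  shows "poly_in V (p * q)"
  unfolding poly_in_def
proof
  fix m assume "m \<in> keys (p * q)"
  then obtain a b where "m = a + b" "a \<in> keys p" "b \<in> keys q"
    using keys_mult[of p q] by blast
  then show "keys m \<subseteq> V"
    using assms keys_add[of a b] unfolding poly_in_def by blast
qed

lemma poly_in_0 [simp]: "poly_in V 0"
  by (simp add: poly_in_def)

lemma poly_in_1 [simp]: "poly_in V 1"
  by (simp add: poly_in_def)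

lemma poly_in_const [simp]: "poly_in V (const c)"
  by (simp add: poly_in_def const_def)

lemma poly_in_pvar: "v \<in> V \<Longrightarrow> poly_in V (pvar v)"
  by (simp add: poly_in_def pvar_def)

lemma poly_in_uminus: "poly_in V p \<Longrightarrow> poly_in V (- p)"
  by (simp add: poly_in_def)

lemma poly_in_diff: "poly_in V p \<Longrightarrow> poly_in V q \<Longrightarrow> poly_in V (p - q)"
  using poly_in_add[of V p "- q"] poly_in_uminus by simp

lemma poly_in_sum: "(\<And>i. i \<in> A \<Longrightarrow> poly_in V (f i)) \<Longrightarrow> poly_in V (\<Sum>i\<in>A. f i)"
  by (induction A rule: infinite_finite_induct) (auto intro: poly_in_add)

lemma poly_in_prod: "(\<And>i. i \<in> A \<Longrightarrow> poly_in V (f i)) \<Longrightarrow> poly_in V (\<Prod>i\<in>A. f i)"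
  by (induction A rule: infinite_finite_induct) (auto intro: poly_in_mult)

lemma poly_in_power: "poly_in V p \<Longrightarrow> poly_in V (p ^ k)"
  by (induction k) (auto intro: poly_in_mult)

lemma poly_in_mono: "poly_in V p \<Longrightarrow> V \<subseteq> V' \<Longrightarrow> poly_in V' p"
  unfolding poly_in_def by blast

lemma poly_in_single: "keys a \<subseteq> V \<Longrightarrow> poly_in V (single a c)"
  by (simp add: poly_in_def)

section \<open>Fischer's inner product and differentiation\<close>

definition exp_fact :: "('v \<Rightarrow>\<^sub>0 nat) \<Rightarrow> nat" where
  "exp_fact a = (\<Prod>v\<in>keys a. fact (lookup a v))"

lemma exp_fact_superset:
  "finite K \<Longrightarrow> keys a \<subseteq> K \<Longrightarrow> exp_fact a = (\<Prod>v\<in>K. fact (lookup a v))"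
  unfolding exp_fact_def by (rule prod.mono_neutral_left) (auto simp: in_keys_iff)

lemma exp_fact_pos: "exp_fact a > 0"
  by (simp add: exp_fact_def)

lemma exp_fact_add_var_exp: "exp_fact (a + var_exp v) = exp_fact a * (lookup a v + 1)"
proof -
  let ?K = "insert v (keys a)"
  have "exp_fact (a + var_exp v) = (\<Prod>w\<in>?K. fact (lookup (a + var_exp v) w))"
    by (rule exp_fact_superset) (use keys_add[of a "var_exp v"] in \<open>auto simp: var_exp_def\<close>)
  also have "\<dots> = fact (lookup a v + 1) * (\<Prod>w\<in>keys a - {v}. fact (lookup a w))"
    by (subst prod.insert_remove)
      (auto simp: lookup_add lookup_var_exp split: if_splits intro!: prod.cong)
  also have "exp_fact a = fact (lookup a v) * (\<Prod>w\<in>keys a - {v}. fact (lookup a w))"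
    by (subst exp_fact_superset[of ?K]) (auto simp: prod.insert_remove)
  ultimately show ?thesis by (simp add: algebra_simps)
qed

definition fischer :: "mpoly \<Rightarrow> mpoly \<Rightarrow> complex" where
  "fischer f g = (\<Sum>a\<in>keys f. lookup f a * lookup g a * of_nat (exp_fact a))"

lemma fischer_superset:
  "finite K \<Longrightarrow> keys f \<subseteq> K \<Longrightarrow> fischer f g = (\<Sum>a\<in>K. lookup f a * lookup g a * of_nat (exp_fact a))"
  unfolding fischer_def by (rule sum.mono_neutral_left) (auto simp: in_keys_iff)

lemma fischer_commute: "fischer f g = fischer g f"
  using fischer_superset[of "keys f \<union> keys g" f g] fischer_superset[of "keys f \<union> keys g" g f]
  by (simp add: mult.commute mult.left_commute)

lemma fischer_superset':
  "finite K \<Longrightarrow> keys g \<subseteq> K \<Longrightarrow> fischer f g = (\<Sum>a\<in>K. lookup f a * lookup g a * of_nat (exp_fact a))"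
  by (subst fischer_commute) (simp add: fischer_superset mult.commute)

lemma fischer_add_left: "fischer (f + f') g = fischer f g + fischer f' g"
proof -
  let ?K = "keys f \<union> keys f'"
  have "fischer (f + f') g = (\<Sum>a\<in>?K. lookup (f + f') a * lookup g a * of_nat (exp_fact a))"
    by (rule fischer_superset) (auto dest: keys_add[THEN subsetD])
  also have "\<dots> = (\<Sum>a\<in>?K. lookup f a * lookup g a * of_nat (exp_fact a))
      + (\<Sum>a\<in>?K. lookup f' a * lookup g a * of_nat (exp_fact a))"
    by (simp add: lookup_add distrib_right sum.distrib)
  also have "\<dots> = fischer f g + fischer f' g"
    by (simp add: fischer_superset[symmetric])
  finally show ?thesis .
qed

interpretation fischer_left: additive "\<lambda>f. fischer f g" for g
  by unfold_locales (rule fischer_add_left)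

interpretation fischer_right: additive "fischer f" for f
  by unfold_locales (simp add: fischer_commute[of f] fischer_add_left)

lemma fischer_const_mult_left: "fischer (const c * f) g = c * fischer f g"
proof -
  have "fischer (const c * f) g = (\<Sum>a\<in>keys f. lookup (const c * f) a * lookup g a * of_nat (exp_fact a))"
    by (rule fischer_superset) (auto simp: lookup_const_mult in_keys_iff)
  then show ?thesis
    by (simp add: fischer_def sum_distrib_left lookup_const_mult mult.assoc)
qed

lemma fischer_const_mult_right: "fischer f (const c * g) = c * fischer f g"
  by (simp add: fischer_commute[of f] fischer_const_mult_left)

lemma fischer_single:
  "fischer (single a c) (single b d) = (if a = b then c * d * of_nat (exp_fact a) else 0)"
  by (cases "c = 0") (auto simp: fischer_def lookup_single when_def)

definition deriv_coeff :: "('v \<Rightarrow>\<^sub>0 nat) \<Rightarrow> ('v \<Rightarrow>\<^sub>0 nat) \<Rightarrow> complex" where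
  "deriv_coeff a m = (\<Prod>v\<in>keys m. \<Prod>t<lookup m v. of_nat (lookup a v - t))"

lemma mderiv_single: "mderiv m (single a c) = single (a - m) (c * deriv_coeff a m)"
  by (cases "c = 0") (simp_all add: mderiv_def deriv_coeff_def)

interpretation mderiv: additive "mderiv m" for m
  by unfold_locales
    (unfold mderiv_def, rule setsum_keys_plus_distrib, simp_all add: single_add distrib_right)

lemma deriv_coeff_superset:
  "finite K \<Longrightarrow> keys m \<subseteq> K \<Longrightarrow> deriv_coeff a m = (\<Prod>v\<in>K. \<Prod>t<lookup m v. of_nat (lookup a v - t))"
  unfolding deriv_coeff_def by (rule prod.mono_neutral_left) (auto simp: in_keys_iff)

lemma deriv_coeff_eq_0_iff: "deriv_coeff a m = 0 \<longleftrightarrow> (\<exists>v. lookup a v < lookup m v)"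
  unfolding deriv_coeff_def
  by (auto simp: prod_zero_iff in_keys_iff) (meson diff_is_0_eq le_trans less_imp_le_nat not_le)

lemma deriv_coeff_self: "deriv_coeff m m = of_nat (exp_fact m)"
proof -
  have "(\<Prod>t<k. of_nat (k - t)) = (of_nat (fact k) :: complex)" for k
  proof -
    have "(\<Prod>t<k. k - t) = (\<Prod>{1..k})"
      by (rule prod.reindex_bij_witness[of _ "\<lambda>i. k - i" "\<lambda>i. k - i"]) auto
    then have "(\<Prod>t<k. k - t) = fact k"
      by (simp add: fact_prod)
    then show ?thesis
      by (metis of_nat_prod)
  qed
  then show ?thesis
    unfolding deriv_coeff_def exp_fact_def of_nat_prod by simp
qed

lemma deriv_coeff_add_var_exp:
  "deriv_coeff a (m + var_exp v) = deriv_coeff a m * of_nat (lookup a v - lookup m v)"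
proof -
  let ?K = "insert v (keys m)"
  let ?g = "\<lambda>m w. (\<Prod>t<lookup m w. (of_nat (lookup a w - t) :: complex))"
  have K: "finite ?K" "keys (m + var_exp v) \<subseteq> ?K" "keys m \<subseteq> ?K"
    using keys_add[of m "var_exp v"] by (auto simp: var_exp_def)
  have "deriv_coeff a (m + var_exp v) = ?g (m + var_exp v) v * (\<Prod>w\<in>?K - {v}. ?g (m + var_exp v) w)"
    unfolding deriv_coeff_superset[OF K(1,2)] by (rule prod.remove) auto
  also have "(\<Prod>w\<in>?K - {v}. ?g (m + var_exp v) w) = (\<Prod>w\<in>?K - {v}. ?g m w)"
    by (rule prod.cong) (auto simp: lookup_add lookup_var_exp)
  also have "?g (m + var_exp v) v = ?g m v * of_nat (lookup a v - lookup m v)"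
    by (simp add: lookup_add lookup_var_exp)
  also have "deriv_coeff a m = ?g m v * (\<Prod>w\<in>?K - {v}. ?g m w)"
    unfolding deriv_coeff_superset[OF K(1,3)] by (rule prod.remove) auto
  ultimately show ?thesis by (simp add: mult_ac)
qed

lemma exp_add_eq_iff:
  "c + a = (e :: 'v \<Rightarrow>\<^sub>0 nat) \<longleftrightarrow> (\<forall>v. lookup c v \<le> lookup e v) \<and> a = e - c"
proof
  assume "c + a = e"
  then show "(\<forall>v. lookup c v \<le> lookup e v) \<and> a = e - c"
    by (auto simp: lookup_add lookup_minus intro!: poly_mapping_eqI)
next
  assume "(\<forall>v. lookup c v \<le> lookup e v) \<and> a = e - c"
  then show "c + a = e"
    by (auto simp: lookup_add lookup_minus intro!: poly_mapping_eqI)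
qed

lemma lookup_mderiv: "lookup (mderiv b r) m = lookup r (m + b) * deriv_coeff (m + b) b"
proof (induction r rule: poly_mapping_induct)
  case (2 a y)
  show ?case
  proof (cases "a - b = m")
    case True
    show ?thesis
    proof (cases "a = m + b")
      case False
      then have "\<exists>v. lookup a v < lookup b v"
        using True exp_add_eq_iff[of b "a - b" a] by (auto simp: add.commute not_le)
      then show ?thesis using True False by (simp add: mderiv_single lookup_single deriv_coeff_eq_0_iff)
    qed (use True in \<open>simp add: mderiv_single lookup_single\<close>)
  next
    case False
    then have "a \<noteq> m + b" by auto
    then show ?thesis using False by (simp add: mderiv_single lookup_single)
  qed
qed (simp_all add: mderiv.add mderiv.zero lookup_add distrib_right)

lemma pair_eq_fischer: "pair f g = fischer f g"
proof -
  have "pair f g = (\<Sum>m\<in>keys g. lookup g m * (lookup f m * of_nat (exp_fact m)))"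
    by (simp add: pair_def apply_diff_def lookup_sum lookup_const_mult lookup_mderiv deriv_coeff_self)
  also have "\<dots> = fischer g f" by (simp add: fischer_def mult.assoc)
  finally show ?thesis by (simp add: fischer_commute)
qed

lemma mderiv_0: "mderiv 0 p = p"
  by (induction p rule: poly_mapping_induct)
    (simp_all add: mderiv_single deriv_coeff_def mderiv.add mderiv.zero)

lemma mderiv_const_mult: "mderiv m (const c * p) = const c * mderiv m p"
  by (induction p rule: poly_mapping_induct)
    (simp_all add: mderiv_single const_mult_single mderiv.add mderiv.zero distrib_left mult.assoc)

lemma pd_single: "pd v (single a c) = single (a - var_exp v) (c * of_nat (lookup a v))"
  by (simp add: pd_def mderiv_single deriv_coeff_def var_exp_def)

interpretation pd: additive "pd v" for v
  by unfold_locales (simp add: pd_def mderiv.add)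

lemma pd_const_mult: "pd v (const c * p) = const c * pd v p"
  by (simp add: pd_def mderiv_const_mult)

lemma mderiv_add_var_exp: "mderiv (m + var_exp v) p = pd v (mderiv m p)"
proof (induction p rule: poly_mapping_induct)
  case (2 a x)
  have "a - (m + var_exp v) = a - m - var_exp v"
    by (rule poly_mapping_eqI) (simp add: lookup_minus lookup_add)
  then show ?case
    by (simp add: mderiv_single pd_single deriv_coeff_add_var_exp lookup_minus mult_ac)
qed (simp_all add: mderiv.add pd.add mderiv.zero pd.zero)

lemma pd_pvar: "pd v (pvar w) = (if v = w then 1 else 0)"
  by (auto simp: pvar_eq_single pd_single lookup_var_exp)

lemma pd_const: "pd v (const c) = 0"
  by (simp add: const_def pd_single)

lemma pd_1 [simp]: "pd v 1 = 0"
  using pd_const[of v 1] by simp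

lemma pd_mult: "pd v (p * q) = pd v p * q + p * pd v q"
proof (rule bilinear_eqI[where L="\<lambda>p q. pd v (p * q)" and R="\<lambda>p q. pd v p * q + p * pd v q"])
  fix a b :: "var \<Rightarrow>\<^sub>0 nat" and c d :: complex
  have shift: "single (a - var_exp v + b) (c * of_nat (lookup a v) * d)
      = single (a + b - var_exp v) (c * of_nat (lookup a v) * d)" for a b :: "var \<Rightarrow>\<^sub>0 nat"
    by (cases "lookup a v = 0") (simp_all add: minus_var_exp_add)
  show "pd v (single a c * single b d) = pd v (single a c) * single b d + single a c * pd v (single b d)"
    using shift[of a b] shift[of b a]
    by (simp add: mult_single pd_single lookup_add add.commute single_add[symmetric] algebra_simps)
qed (simp_all add: pd.add distrib_left distrib_right)

lemma fischer_pd_right: "fischer f (pd v g) = fischer (pvar v * f) g"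
proof (rule bilinear_eqI[where L="\<lambda>f g. fischer f (pd v g)" and R="\<lambda>f g. fischer (pvar v * f) g"])
  fix a c b d
  show "fischer (single a c) (pd v (single b d)) = fischer (pvar v * single a c) (single b d)"
  proof (cases "a + var_exp v = b")
    case True
    then show ?thesis
      by (auto simp: pd_single pvar_eq_single mult_single fischer_single exp_fact_add_var_exp
          var_exp_minus_cancel lookup_add lookup_var_exp algebra_simps)
  next
    case False
    then have "b - var_exp v \<noteq> a \<or> lookup b v = 0"
      using minus_var_exp_add_cancel[of b v] by auto
    then show ?thesis using False
      by (auto simp: pd_single pvar_eq_single mult_single fischer_single add.commute)
  qed
qed (simp_all add: fischer_left.add fischer_right.add pd.add distrib_left)

lemma fischer_pvar_mult_right: "fischer f (pvar v * g) = fischer (pd v f) g"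
  by (simp add: fischer_commute[of f] fischer_pd_right[symmetric] fischer_commute[of g])

lemma fischer_mderiv_right: "fischer f (mderiv m g) = fischer (single m 1 * f) g"
proof (induction m arbitrary: f rule: exp_induct[OF subset_UNIV, case_names zero add_var])
  case (add_var m v)
  then show ?case by (simp add: mderiv_add_var_exp fischer_pd_right single_add_var_exp mult_ac)
qed (simp_all add: mderiv_0)

lemma fischer_single_mult_right: "fischer f (single m 1 * g) = fischer (mderiv m f) g"
  by (simp add: fischer_commute[of f] fischer_mderiv_right[symmetric] fischer_commute[of g])

lemma pd_eq_0_if_poly_in:
  assumes "poly_in V p" and "v \<notin> V"
  shows "pd v p = 0"
proof (rule poly_mapping_induct_keys[where Q="\<lambda>a. keys a \<subseteq> V" and P="\<lambda>p. pd v p = 0"])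
  fix a :: "var \<Rightarrow>\<^sub>0 nat" and c :: complex
  assume "keys a \<subseteq> V"
  then have "lookup a v = 0" using assms(2) by (auto simp: in_keys_iff)
  then show "pd v (single a c) = 0" by (simp add: pd_single)
qed (use assms in \<open>auto simp: poly_in_def pd.add pd.zero\<close>)

lemma poly_in_pd:
  assumes "poly_in V p"
  shows "poly_in V (pd v p)"
proof -
  have "keys (a - var_exp v) \<subseteq> keys a" for a
    by (auto simp: in_keys_iff lookup_minus)
  then have "poly_in V (single (a - var_exp v) c)" if "a \<in> keys p" for a c
    using assms that unfolding poly_in_def by auto
  then show ?thesis
    unfolding pd_def mderiv_def var_exp_def[symmetric] by (intro poly_in_sum) auto
qed

section \<open>Substituting \<open>\<phi>\<^sub>\<lambda>(x)\<close> for \<open>y\<close>\<close>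

definition subst_exp :: "(var \<Rightarrow> mpoly) \<Rightarrow> (var \<Rightarrow>\<^sub>0 nat) \<Rightarrow> mpoly" where
  "subst_exp \<sigma> a = (\<Prod>v\<in>keys a. \<sigma> v ^ lookup a v)"

lemma subst_single: "subst \<sigma> (single a c) = const c * subst_exp \<sigma> a"
  by (cases "c = 0") (simp_all add: subst_def subst_exp_def)

interpretation subst: additive "subst \<sigma>" for \<sigma>
  by unfold_locales
    (unfold subst_def subst_exp_def[symmetric], rule setsum_keys_plus_distrib,
      simp_all add: const_add distrib_right)

lemma subst_exp_superset:
  "finite K \<Longrightarrow> keys a \<subseteq> K \<Longrightarrow> subst_exp \<sigma> a = (\<Prod>v\<in>K. \<sigma> v ^ lookup a v)"
  unfolding subst_exp_def by (rule prod.mono_neutral_left) (auto simp: in_keys_iff)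

lemma subst_exp_add: "subst_exp \<sigma> (a + b) = subst_exp \<sigma> a * subst_exp \<sigma> b"
proof -
  let ?K = "keys a \<union> keys b"
  have "subst_exp \<sigma> (a + b) = (\<Prod>v\<in>?K. \<sigma> v ^ lookup (a + b) v)"
    by (rule subst_exp_superset) (use keys_add[of a b] in auto)
  then show ?thesis
    by (simp add: lookup_add power_add prod.distrib subst_exp_superset[symmetric])
qed

lemma subst_exp_0 [simp]: "subst_exp \<sigma> 0 = 1"
  by (simp add: subst_exp_def)

lemma subst_exp_var_exp: "subst_exp \<sigma> (var_exp v) = \<sigma> v"
  by (simp add: subst_exp_def var_exp_def)

lemma subst_mult: "subst \<sigma> (p * q) = subst \<sigma> p * subst \<sigma> q"
proof (rule bilinear_eqI[where L="\<lambda>p q. subst \<sigma> (p * q)" and R="\<lambda>p q. subst \<sigma> p * subst \<sigma> q"])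
  fix a b :: "var \<Rightarrow>\<^sub>0 nat" and c d :: complex
  show "subst \<sigma> (single a c * single b d) = subst \<sigma> (single a c) * subst \<sigma> (single b d)"
    unfolding mult_single subst_single subst_exp_add const_mult by (simp only: mult_ac)
qed (simp_all add: subst.add distrib_left distrib_right)

lemma subst_const: "subst \<sigma> (const c) = const c"
  by (simp add: const_def subst_single)

lemma subst_pvar: "subst \<sigma> (pvar v) = \<sigma> v"
  by (simp add: pvar_eq_single subst_single subst_exp_var_exp)

lemma subst_1 [simp]: "subst \<sigma> 1 = 1"
  using subst_const[of \<sigma> 1] by simp

lemma subst_power: "subst \<sigma> (p ^ k) = subst \<sigma> p ^ k"
  by (induction k) (simp_all add: subst_mult)

abbreviation Phi :: "nat \<Rightarrow> mpoly \<Rightarrow> mpoly" where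
  "Phi n \<equiv> subst (phi_subst n)"

lemma phi_subst_simps [simp]:
  "phi_subst n (X i) = pvar (X i)"
  "phi_subst n (Y j) = phi n (pvar (X j))"
  "phi_subst n (Lam k) = pvar (Lam k)"
  by (simp_all add: phi_subst_def)

definition Eop_adj :: "nat \<Rightarrow> nat \<Rightarrow> mpoly \<Rightarrow> mpoly" where
  "Eop_adj n k h = (\<Sum>i=1..n. pvar (X i) ^ k * pd (Y i) h)"

lemma fischer_Eop_right: "fischer f (Eop n k g) = fischer (Eop_adj n k f) g"
proof -
  have pd_power: "fischer f ((pd v ^^ k) g) = fischer (pvar v ^ k * f) g" for v f
    by (induction k arbitrary: f) (simp_all add: fischer_pd_right mult_ac)
  show ?thesis
    by (simp add: Eop_def Eop_adj_def fischer_left.sum fischer_right.sum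
        fischer_pvar_mult_right pd_power)
qed

interpretation Eop_adj: additive "Eop_adj n k" for n k
  by unfold_locales (simp add: Eop_adj_def pd.add distrib_left sum.distrib)

lemma Eop_adj_const_mult: "Eop_adj n k (const c * p) = const c * Eop_adj n k p"
  unfolding Eop_adj_def pd_const_mult sum_distrib_left by (simp add: mult_ac)

lemma Eop_adj_mult: "Eop_adj n k (p * q) = Eop_adj n k p * q + p * Eop_adj n k q"
  by (simp add: Eop_adj_def pd_mult distrib_left sum.distrib sum_distrib_left sum_distrib_right mult_ac)

lemma poly_in_Eop_adj: "poly_in (xy_vars n) f \<Longrightarrow> poly_in (xy_vars n) (Eop_adj n k f)"
  unfolding Eop_adj_def
  by (auto intro!: poly_in_sum poly_in_mult poly_in_power poly_in_pvar poly_in_pd simp: xy_vars_def)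

lemma pd_Lam_phi:
  assumes "k \<in> {1..n-1}"
  shows "pd (Lam k) (phi n (pvar (X j))) = pvar (X j) ^ k"
proof -
  have "pd (Lam k) (pvar (X j) ^ l) = 0" for l
    by (rule pd_eq_0_if_poly_in[where V="{X j}"]) (auto intro!: poly_in_power poly_in_pvar)
  then have "pd (Lam k) (phi n (pvar (X j))) = (\<Sum>l=1..n-1. if k = l then pvar (X j) ^ l else 0)"
    unfolding phi_def pd.sum by (intro sum.cong) (simp_all add: pd_mult pd_pvar)
  then show ?thesis
    using assms by simp
qed

lemma pd_Lam_Phi:
  assumes k: "k \<in> {1..n-1}" and h: "poly_in (xy_vars n) h"
  shows "pd (Lam k) (Phi n h) = Phi n (Eop_adj n k h)"
proof -
  have var: "pd (Lam k) (Phi n (pvar v)) = Phi n (Eop_adj n k (pvar v))" if "v \<in> xy_vars n" for v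
  proof -
    from that consider (x) i where "v = X i" | (y) j where "v = Y j" "j \<in> {1..n}"
      by (auto simp: xy_vars_def)
    then show ?thesis
    proof cases
      case y
      have "Eop_adj n k (pvar v) = pvar (X j) ^ k"
        using y by (simp add: Eop_adj_def pd_pvar if_distrib sum.delta cong: if_cong)
      then show ?thesis using y k by (simp add: subst_pvar pd_Lam_phi subst_power)
    qed (simp add: subst_pvar pd_pvar Eop_adj_def subst.zero)
  qed
  have monomial: "pd (Lam k) (Phi n (single a 1)) = Phi n (Eop_adj n k (single a 1))"
    if "keys a \<subseteq> xy_vars n" for a
    using that
  proof (induction a rule: exp_induct)
    case (add_var a v)
    then show ?case
      by (simp add: single_add_var_exp subst_mult subst.add pd_mult Eop_adj_mult var)
  qed (simp add: Eop_adj_def subst.zero)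
  show ?thesis
  proof (rule poly_mapping_induct_keys[where Q="\<lambda>a. keys a \<subseteq> xy_vars n"
        and P="\<lambda>h. pd (Lam k) (Phi n h) = Phi n (Eop_adj n k h)"])
    fix a :: "var \<Rightarrow>\<^sub>0 nat" and c :: complex
    assume "keys a \<subseteq> xy_vars n"
    then show "pd (Lam k) (Phi n (single a c)) = Phi n (Eop_adj n k (single a c))"
      using monomial const_mult_single[of c a 1]
      by (metis mult.right_neutral subst_mult subst_const pd_const_mult Eop_adj_const_mult)
  qed (use h in \<open>simp_all add: poly_in_def subst.add pd.add Eop_adj.add
      subst.zero pd.zero Eop_adj.zero\<close>)
qed

definition no_pure_x :: "mpoly \<Rightarrow> bool" where
  "no_pure_x p \<longleftrightarrow> (\<forall>a\<in>keys p. \<not> keys a \<subseteq> range X)"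

lemma no_pure_x_mult:
  assumes "no_pure_x p"
  shows "no_pure_x (p * q)"
  unfolding no_pure_x_def
proof
  fix m assume "m \<in> keys (p * q)"
  then obtain a b where "m = a + b" "a \<in> keys p" "b \<in> keys q"
    using keys_mult[of p q] by blast
  then have "keys a \<subseteq> keys m" and "\<not> keys a \<subseteq> range X"
    using assms keys_add_exp[of a b] unfolding no_pure_x_def by simp_all
  then show "\<not> keys m \<subseteq> range X"
    by (meson subset_trans)
qed

lemma no_pure_x_pvar: "v \<notin> range X \<Longrightarrow> no_pure_x (pvar v)"
  by (simp add: no_pure_x_def pvar_def)

lemma no_pure_x_add: "no_pure_x p \<Longrightarrow> no_pure_x q \<Longrightarrow> no_pure_x (p + q)"
  unfolding no_pure_x_def using keys_add[of p q] by blast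

lemma no_pure_x_sum: "(\<And>i. i \<in> A \<Longrightarrow> no_pure_x (f i)) \<Longrightarrow> no_pure_x (\<Sum>i\<in>A. f i)"
  by (induction A rule: infinite_finite_induct) (simp_all add: no_pure_x_add no_pure_x_def[of 0])

lemma no_pure_x_phi_subst:
  assumes "v \<notin> range X"
  shows "no_pure_x (phi_subst n v)"
proof (cases v)
  case (Y j)
  have "no_pure_x (pvar (Lam k) * pvar (X j) ^ k)" for k
    by (intro no_pure_x_mult no_pure_x_pvar) auto
  then show ?thesis using Y by (simp add: phi_def no_pure_x_sum)
qed (use assms in \<open>auto intro: no_pure_x_pvar\<close>)

lemma subst_exp_pure_x: "keys b \<subseteq> range X \<Longrightarrow> subst_exp (phi_subst n) b = single b 1"
proof (induction b rule: exp_induct)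
  case (add_var a v)
  then obtain i where "v = X i" by blast
  with add_var show ?case by (simp add: subst_exp_add subst_exp_var_exp single_add_var_exp)
qed simp

lemma no_pure_x_subst_exp:
  assumes "\<not> keys b \<subseteq> range X"
  shows "no_pure_x (subst_exp (phi_subst n) b)"
proof -
  obtain v where v: "v \<in> keys b" "v \<notin> range X" using assms by auto
  then have "b = (b - var_exp v) + var_exp v"
    by (simp add: minus_var_exp_add_cancel in_keys_iff)
  then have "subst_exp (phi_subst n) b = phi_subst n v * subst_exp (phi_subst n) (b - var_exp v)"
    by (metis subst_exp_add subst_exp_var_exp mult.commute)
  then show ?thesis
    using no_pure_x_mult[OF no_pure_x_phi_subst[OF v(2)]] by simp
qed

lemma lookup_Phi_pure_x:
  assumes "keys e \<subseteq> range X"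
  shows "lookup (Phi n h) e = lookup h e"
proof (induction h rule: poly_mapping_induct)
  case (2 b c)
  show ?case
  proof (cases "keys b \<subseteq> range X")
    case True
    then show ?thesis by (simp add: subst_single subst_exp_pure_x const_mult_single)
  next
    case False
    then have "e \<notin> keys (subst_exp (phi_subst n) b)"
      using no_pure_x_subst_exp[OF False, of n] assms by (auto simp: no_pure_x_def)
    moreover have "b \<noteq> e" using False assms by auto
    ultimately show ?thesis by (simp add: subst_single lookup_const_mult in_keys_iff lookup_single)
  qed
qed (simp_all add: subst.add subst.zero lookup_add)

lemma poly_in_Vandermonde: "poly_in (X ` {1..n}) (Vandermonde n)"
  unfolding Vandermonde_def by (rule poly_in_prod) (auto intro!: poly_in_diff poly_in_pvar)

lemma fischer_Phi_Vandermonde: "fischer (Phi n h) (Vandermonde n) = fischer h (Vandermonde n)"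
proof -
  have "keys e \<subseteq> range X" if "e \<in> keys (Vandermonde n)" for e
    using poly_in_Vandermonde[of n] that unfolding poly_in_def by blast
  then show ?thesis
    by (simp add: fischer_superset'[of "keys (Vandermonde n)"] lookup_Phi_pure_x cong: sum.cong)
qed

inductive_set Delta_module :: "nat \<Rightarrow> mpoly set" for n where
  Delta_module_Vandermonde: "Vandermonde n \<in> Delta_module n"
| Delta_module_zero: "0 \<in> Delta_module n"
| Delta_module_add: "p \<in> Delta_module n \<Longrightarrow> q \<in> Delta_module n \<Longrightarrow> p + q \<in> Delta_module n"
| Delta_module_const_mult: "p \<in> Delta_module n \<Longrightarrow> const c * p \<in> Delta_module n"
| Delta_module_pd_X: "p \<in> Delta_module n \<Longrightarrow> i \<in> {1..n} \<Longrightarrow> pd (X i) p \<in> Delta_module n"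
| Delta_module_Lam_mult: "p \<in> Delta_module n \<Longrightarrow> k \<in> {1..n-1} \<Longrightarrow> pvar (Lam k) * p \<in> Delta_module n"

definition Phi_adjoint :: "nat \<Rightarrow> mpoly \<Rightarrow> mpoly \<Rightarrow> bool" where
  "Phi_adjoint n g w \<longleftrightarrow> (\<forall>f. poly_in (xy_vars n) f \<longrightarrow> fischer f g = fischer (Phi n f) w)"

lemma Phi_adjoint_Vandermonde: "Phi_adjoint n (Vandermonde n) (Vandermonde n)"
  by (simp add: Phi_adjoint_def fischer_Phi_Vandermonde)

lemma Phi_adjoint_zero: "Phi_adjoint n 0 0"
  by (simp add: Phi_adjoint_def fischer_right.zero)

lemma Phi_adjoint_add: "Phi_adjoint n g w \<Longrightarrow> Phi_adjoint n g' w' \<Longrightarrow> Phi_adjoint n (g + g') (w + w')"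
  by (simp add: Phi_adjoint_def fischer_right.add)

lemma Phi_adjoint_const_mult: "Phi_adjoint n g w \<Longrightarrow> Phi_adjoint n (const c * g) (const c * w)"
  by (simp add: Phi_adjoint_def fischer_const_mult_right)

lemma Phi_adjoint_pd_X:
  assumes "Phi_adjoint n g w" and "i \<in> {1..n}"
  shows "Phi_adjoint n (pd (X i) g) (pd (X i) w)"
  unfolding Phi_adjoint_def
proof (intro allI impI)
  fix f assume "poly_in (xy_vars n) f"
  then have "poly_in (xy_vars n) (pvar (X i) * f)"
    using assms(2) by (auto intro!: poly_in_mult poly_in_pvar simp: xy_vars_def)
  then show "fischer f (pd (X i) g) = fischer (Phi n f) (pd (X i) w)"
    using assms(1) by (simp add: Phi_adjoint_def fischer_pd_right subst_mult subst_pvar)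
qed

lemma Phi_adjoint_Eop:
  assumes "Phi_adjoint n g w" and k: "k \<in> {1..n-1}"
  shows "Phi_adjoint n (Eop n k g) (pvar (Lam k) * w)"
  unfolding Phi_adjoint_def
proof (intro allI impI)
  fix f assume f: "poly_in (xy_vars n) f"
  have "fischer f (Eop n k g) = fischer (Eop_adj n k f) g"
    by (rule fischer_Eop_right)
  also have "\<dots> = fischer (Phi n (Eop_adj n k f)) w"
    using assms(1) poly_in_Eop_adj[OF f] by (simp add: Phi_adjoint_def)
  also have "\<dots> = fischer (Phi n f) (pvar (Lam k) * w)"
    by (simp add: pd_Lam_Phi[OF k f] fischer_pvar_mult_right)
  finally show "fischer f (Eop n k g) = fischer (Phi n f) (pvar (Lam k) * w)" .
qed

lemma OP_Phi_adjoint: "g \<in> OP n \<Longrightarrow> \<exists>w\<in>Delta_module n. Phi_adjoint n g w"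
proof (induction g rule: OP.induct)
  case OP_Delta
  then show ?case using Phi_adjoint_Vandermonde Delta_module_Vandermonde by blast
next
  case OP_zero
  then show ?case using Phi_adjoint_zero Delta_module_zero by blast
next
  case (OP_add p q)
  then show ?case using Phi_adjoint_add Delta_module_add by blast
next
  case (OP_smult p c)
  then show ?case using Phi_adjoint_const_mult Delta_module_const_mult by blast
next
  case (OP_dx p i)
  then show ?case using Phi_adjoint_pd_X Delta_module_pd_X by blast
next
  case (OP_E p k)
  then show ?case using Phi_adjoint_Eop Delta_module_Lam_mult by blast
qed

lemma Delta_module_Phi_adjoint: "w \<in> Delta_module n \<Longrightarrow> \<exists>g\<in>OP n. Phi_adjoint n g w"
proof (induction w rule: Delta_module.induct)
  case Delta_module_Vandermonde
  then show ?case using Phi_adjoint_Vandermonde OP_Delta by blast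
next
  case Delta_module_zero
  then show ?case using Phi_adjoint_zero OP_zero by blast
next
  case (Delta_module_add p q)
  then show ?case using Phi_adjoint_add OP_add by blast
next
  case (Delta_module_const_mult p c)
  then show ?case using Phi_adjoint_const_mult OP_smult by blast
next
  case (Delta_module_pd_X p i)
  then show ?case using Phi_adjoint_pd_X OP_dx by blast
next
  case (Delta_module_Lam_mult p k)
  then show ?case using Phi_adjoint_Eop OP_E by blast
qed

lemma orth_OP_iff:
  assumes "poly_in (xy_vars n) f"
  shows "f \<in> orth (OP n) \<longleftrightarrow> (\<forall>w\<in>Delta_module n. fischer (Phi n f) w = 0)"
proof
  assume "f \<in> orth (OP n)"
  then have orth: "fischer f g = 0" if "g \<in> OP n" for g
    using that by (simp add: orth_def pair_eq_fischer)
  show "\<forall>w\<in>Delta_module n. fischer (Phi n f) w = 0"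
  proof
    fix w assume "w \<in> Delta_module n"
    then obtain g where "g \<in> OP n" "Phi_adjoint n g w"
      using Delta_module_Phi_adjoint by blast
    then show "fischer (Phi n f) w = 0"
      using orth[of g] assms by (simp add: Phi_adjoint_def)
  qed
next
  assume orth: "\<forall>w\<in>Delta_module n. fischer (Phi n f) w = 0"
  show "f \<in> orth (OP n)"
    unfolding orth_def pair_eq_fischer
  proof (intro CollectI ballI)
    fix g assume "g \<in> OP n"
    then obtain w where "w \<in> Delta_module n" "Phi_adjoint n g w"
      using OP_Phi_adjoint by blast
    then show "fischer f g = 0"
      using orth assms by (simp add: Phi_adjoint_def)
  qed
qed

section \<open>Complete homogeneous symmetric polynomials and the ideal\<close>

definition hsym_fps :: "nat \<Rightarrow> mpoly fps" where
  "hsym_fps k = (\<Prod>j\<in>{1..k}. Abs_fps (\<lambda>m. pvar (X j) ^ m))"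

definition esym_fps :: "nat \<Rightarrow> mpoly fps" where
  "esym_fps n = (\<Prod>j\<in>{1..n}. 1 - fps_const (pvar (X j)) * fps_X)"

definition hsym :: "nat \<Rightarrow> nat \<Rightarrow> mpoly" where
  "hsym k m = fps_nth (hsym_fps k) m"

lemma geometric_fps_inverse:
  fixes x :: "'a::comm_ring_1"
  shows "Abs_fps (\<lambda>m. x ^ m) * (1 - fps_const x * fps_X) = 1"
proof (rule fps_ext)
  fix m
  have "Abs_fps (\<lambda>m. x ^ m) * (1 - fps_const x * fps_X)
      = Abs_fps (\<lambda>m. x ^ m) - fps_const x * (fps_X * Abs_fps (\<lambda>m. x ^ m))"
    by (simp add: right_diff_distrib mult_ac)
  then show "fps_nth (Abs_fps (\<lambda>m. x ^ m) * (1 - fps_const x * fps_X)) m = fps_nth 1 m"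
    by (cases m) (simp_all add: fps_X_mult_nth)
qed

lemma esym_fps_hsym_fps: "esym_fps n * hsym_fps n = 1"
proof -
  have "esym_fps n * hsym_fps n
      = (\<Prod>j\<in>{1..n}. Abs_fps (\<lambda>m. pvar (X j) ^ m) * (1 - fps_const (pvar (X j)) * fps_X))"
    unfolding esym_fps_def hsym_fps_def prod.distrib by (rule mult.commute)
  then show ?thesis by (simp add: geometric_fps_inverse)
qed

lemma prod_fps_const_mult_X:
  "finite B \<Longrightarrow> (\<Prod>j\<in>B. fps_const (x j) * fps_X) = fps_const (\<Prod>j\<in>B. x j) * fps_X ^ card B"
  by (induction B rule: finite_induct) (simp_all add: mult_ac flip: fps_const_mult)

lemma fps_const_neg_one_power_mult:
  "fps_const ((- 1) ^ k * p) = (- 1) ^ k * fps_const (p :: 'a::comm_ring_1)"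
  by (induction k) (simp_all flip: fps_const_mult fps_const_neg)

lemma esym_0: "esym n 0 = 1"
proof -
  have "{S. S \<subseteq> {1..n} \<and> card S = 0} = {{}}" by (auto dest: finite_subset)
  then show ?thesis by (simp add: esym_def)
qed

lemma esym_eq_0: "n < i \<Longrightarrow> esym n i = 0"
proof -
  assume "n < i"
  have empty: "{S. S \<subseteq> {1..n} \<and> card S = i} = {}"
  proof safe
    fix S assume "S \<subseteq> {1..n}" "i = card S"
    then have "card S \<le> n" using card_mono[of "{1..n}" S] by simp
    then show "S \<in> {}" using \<open>n < i\<close> \<open>i = card S\<close> by simp
  qed
  show ?thesis
    unfolding esym_def empty by simp
qed

lemma fps_nth_esym_fps: "fps_nth (esym_fps n) i = (- 1) ^ i * esym n i"
proof -
  have "esym_fps n = (\<Sum>B\<in>Pow {1..n}. (- 1) ^ card B * (\<Prod>j\<in>B. fps_const (pvar (X j)) * fps_X)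
      * (\<Prod>j\<in>{1..n} - B. 1))"
    unfolding esym_fps_def by (rule prod_diff_conv_sum) simp
  also have "\<dots> = (\<Sum>B\<in>Pow {1..n}. fps_const ((- 1) ^ card B * (\<Prod>j\<in>B. pvar (X j))) * fps_X ^ card B)"
    by (rule sum.cong) (auto simp: prod_fps_const_mult_X finite_subset fps_const_neg_one_power_mult)
  finally have "fps_nth (esym_fps n) i
      = (\<Sum>B\<in>Pow {1..n}. if card B = i then (- 1) ^ i * (\<Prod>j\<in>B. pvar (X j)) else 0)"
    by (simp add: fps_sum_nth fps_X_power_mult_right_nth cong: if_cong) (rule sum.cong, auto)
  also have "\<dots> = (\<Sum>B\<in>{B\<in>Pow {1..n}. card B = i}. (- 1) ^ i * (\<Prod>j\<in>B. pvar (X j)))"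
    by (subst sum.inter_filter[symmetric]) (simp_all add: Pow_def)
  also have "\<dots> = (- 1) ^ i * esym n i"
    by (simp add: esym_def sum_distrib_left Pow_def conj_commute)
  finally show ?thesis .
qed

lemma esym_hsym_convolution:
  "m \<ge> 1 \<Longrightarrow> (\<Sum>i=0..m. (- 1) ^ i * esym n i * hsym n (m - i)) = 0"
  using arg_cong[OF esym_fps_hsym_fps, of "\<lambda>F. fps_nth F m"]
  by (simp add: fps_mult_nth fps_nth_esym_fps hsym_def)

lemma hsym_0 [simp]: "hsym k 0 = 1"
proof -
  have "fps_nth (\<Prod>j\<in>A. F j) 0 = (\<Prod>j\<in>A. fps_nth (F j) 0)" for A and F :: "nat \<Rightarrow> mpoly fps"
    by (induction A rule: infinite_finite_induct) simp_all
  then show ?thesis by (simp add: hsym_def hsym_fps_def)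
qed

lemma hsym_fps_Suc: "hsym_fps (Suc k) = hsym_fps k * Abs_fps (\<lambda>m. pvar (X (Suc k)) ^ m)"
proof -
  have "{1..Suc k} = insert (Suc k) {1..k}" by auto
  then show ?thesis by (simp add: hsym_fps_def mult.commute)
qed

lemma hsym_Suc: "hsym (Suc k) m = (\<Sum>i=0..m. hsym k i * pvar (X (Suc k)) ^ (m - i))"
  by (simp add: hsym_def hsym_fps_Suc fps_mult_nth)

lemma hsym_Suc_eq_power_plus:
  "hsym (Suc k) d = pvar (X (Suc k)) ^ d + (\<Sum>i=1..d. hsym k i * pvar (X (Suc k)) ^ (d - i))"
  unfolding hsym_Suc by (subst sum.atLeast_Suc_atMost) simp_all

lemma hsym_recurrence:
  assumes "m \<ge> 1"
  shows "hsym k m = hsym (Suc k) m - pvar (X (Suc k)) * hsym (Suc k) (m - 1)"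
proof -
  let ?x = "pvar (X (Suc k))"
  have "hsym_fps k = hsym_fps (Suc k) * (1 - fps_const ?x * fps_X)"
    by (simp add: hsym_fps_Suc mult.assoc geometric_fps_inverse)
  also have "\<dots> = hsym_fps (Suc k) - fps_const ?x * (fps_X * hsym_fps (Suc k))"
    by (simp add: algebra_simps)
  finally show ?thesis
    using assms by (simp add: hsym_def fps_X_mult_nth)
qed

lemma poly_in_hsym: "poly_in (X ` {1..k}) (hsym k m)"
proof (induction k arbitrary: m)
  case 0
  then show ?case by (cases m) (simp_all add: hsym_def hsym_fps_def)
next
  case (Suc k)
  have "poly_in (X ` {1..Suc k}) (hsym k i * pvar (X (Suc k)) ^ (m - i))" for i
    by (intro poly_in_mult poly_in_power poly_in_pvar poly_in_mono[OF Suc.IH]) auto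
  then show ?case by (simp add: hsym_Suc poly_in_sum)
qed

lemma in_esym_ideal_0: "in_esym_ideal n 0"
  unfolding in_esym_ideal_def by (rule exI[of _ "\<lambda>_. 0"]) simp

lemma in_esym_ideal_add:
  assumes "in_esym_ideal n p" and "in_esym_ideal n p'"
  shows "in_esym_ideal n (p + p')"
proof -
  obtain q q' where "\<forall>i\<in>{1..n}. poly_in (xlam_vars n) (q i)" "p = (\<Sum>i=1..n. q i * esym n i)"
    "\<forall>i\<in>{1..n}. poly_in (xlam_vars n) (q' i)" "p' = (\<Sum>i=1..n. q' i * esym n i)"
    using assms unfolding in_esym_ideal_def by blast
  then show ?thesis
    unfolding in_esym_ideal_def
    by (intro exI[of _ "\<lambda>i. q i + q' i"]) (simp add: poly_in_add sum.distrib distrib_right)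
qed

lemma in_esym_ideal_mult:
  assumes "poly_in (xlam_vars n) r" and "in_esym_ideal n p"
  shows "in_esym_ideal n (r * p)"
proof -
  obtain q where "\<forall>i\<in>{1..n}. poly_in (xlam_vars n) (q i)" "p = (\<Sum>i=1..n. q i * esym n i)"
    using assms(2) unfolding in_esym_ideal_def by blast
  then show ?thesis
    unfolding in_esym_ideal_def using assms(1)
    by (intro exI[of _ "\<lambda>i. r * q i"]) (simp add: poly_in_mult sum_distrib_left mult.assoc)
qed

lemma in_esym_ideal_esym:
  assumes "i \<in> {1..n}" and "poly_in (xlam_vars n) r"
  shows "in_esym_ideal n (r * esym n i)"
  unfolding in_esym_ideal_def
proof (intro exI[of _ "\<lambda>j. if j = i then r else 0"] conjI)
  have "(\<Sum>j=1..n. (if j = i then r else 0) * esym n j) = (\<Sum>j=1..n. if j = i then r * esym n j else 0)"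
    by (rule sum.cong) auto
  then show "r * esym n i = (\<Sum>j=1..n. (if j = i then r else 0) * esym n j)"
    using assms(1) by simp
qed (use assms in auto)

lemma in_esym_ideal_uminus:
  assumes "in_esym_ideal n p"
  shows "in_esym_ideal n (- p)"
proof -
  have "const (- 1) * p = - p"
    by (rule poly_mapping_eqI) (simp add: lookup_const_mult)
  then show ?thesis
    using in_esym_ideal_mult[OF poly_in_const assms] by metis
qed

lemma in_esym_ideal_diff: "in_esym_ideal n p \<Longrightarrow> in_esym_ideal n p' \<Longrightarrow> in_esym_ideal n (p - p')"
  using in_esym_ideal_add[of n p "- p'"] in_esym_ideal_uminus by simp

lemma in_esym_ideal_sum: "(\<And>i. i \<in> A \<Longrightarrow> in_esym_ideal n (f i)) \<Longrightarrow> in_esym_ideal n (\<Sum>i\<in>A. f i)"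
  by (induction A rule: infinite_finite_induct) (auto intro: in_esym_ideal_add in_esym_ideal_0)

lemma hsym_n_in_esym_ideal:
  assumes "m \<ge> 1"
  shows "in_esym_ideal n (hsym n m)"
proof -
  have "hsym n m = - (\<Sum>i=1..m. (- 1) ^ i * esym n i * hsym n (m - i))"
    using esym_hsym_convolution[OF assms, of n]
    by (simp add: sum.atLeast_Suc_atMost esym_0 eq_neg_iff_add_eq_0)
  moreover have "in_esym_ideal n ((- 1) ^ i * esym n i * hsym n (m - i))" if "i \<in> {1..m}" for i
  proof (cases "i \<le> n")
    case True
    have "poly_in (xlam_vars n) ((- 1) ^ i * hsym n (m - i))"
      by (intro poly_in_mult poly_in_power poly_in_uminus poly_in_1 poly_in_mono[OF poly_in_hsym])
        (auto simp: xlam_vars_def)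
    then have "in_esym_ideal n (((- 1) ^ i * hsym n (m - i)) * esym n i)"
      using True that by (intro in_esym_ideal_esym) auto
    then show ?thesis by (simp add: mult_ac)
  qed (simp add: esym_eq_0 in_esym_ideal_0)
  ultimately show ?thesis
    by (auto intro!: in_esym_ideal_uminus in_esym_ideal_sum)
qed

lemma hsym_in_esym_ideal:
  "1 \<le> k \<Longrightarrow> k \<le> n \<Longrightarrow> n - k < m \<Longrightarrow> in_esym_ideal n (hsym k m)"
proof (induction "n - k" arbitrary: k m)
  case 0
  then show ?case using hsym_n_in_esym_ideal by simp
next
  case (Suc d)
  then have "in_esym_ideal n (hsym (Suc k) m)" and "in_esym_ideal n (hsym (Suc k) (m - 1))"
    by auto
  moreover have "Suc k \<le> n" using Suc.hyps(2) by simp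
  ultimately have "in_esym_ideal n (hsym (Suc k) m - pvar (X (Suc k)) * hsym (Suc k) (m - 1))"
    by (intro in_esym_ideal_diff in_esym_ideal_mult poly_in_pvar) (auto simp: xlam_vars_def)
  then show ?case using hsym_recurrence[of m k] Suc.prems by simp
qed

section \<open>Reduction to Artin monomials\<close>

definition artin_exp :: "nat \<Rightarrow> (var \<Rightarrow>\<^sub>0 nat) \<Rightarrow> bool" where
  "artin_exp n a \<longleftrightarrow> (\<forall>j\<in>{1..n}. lookup a (X j) \<le> n - j)"

definition artin_reducible :: "nat \<Rightarrow> mpoly \<Rightarrow> bool" where
  "artin_reducible n p \<longleftrightarrow> (\<exists>r q. p = r + q \<and> poly_in (xlam_vars n) r \<and>
     (\<forall>a\<in>keys r. artin_exp n a) \<and> in_esym_ideal n q)"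

lemma artin_reducible_add:
  assumes "artin_reducible n p" and "artin_reducible n p'"
  shows "artin_reducible n (p + p')"
proof -
  obtain r q r' q' where *: "p = r + q" "poly_in (xlam_vars n) r" "\<forall>a\<in>keys r. artin_exp n a"
    "in_esym_ideal n q" "p' = r' + q'" "poly_in (xlam_vars n) r'" "\<forall>a\<in>keys r'. artin_exp n a"
    "in_esym_ideal n q'"
    using assms unfolding artin_reducible_def by blast
  have "\<forall>a\<in>keys (r + r'). artin_exp n a"
    using *(3,7) keys_add[of r r'] by blast
  then show ?thesis
    unfolding artin_reducible_def using *
    by (intro exI[of _ "r + r'"] exI[of _ "q + q'"]) (simp add: poly_in_add in_esym_ideal_add add_ac)
qed

lemma artin_reducible_uminus:
  assumes "artin_reducible n p"
  shows "artin_reducible n (- p)"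
proof -
  obtain r q where "p = r + q" "poly_in (xlam_vars n) r" "\<forall>a\<in>keys r. artin_exp n a"
    "in_esym_ideal n q"
    using assms unfolding artin_reducible_def by blast
  then show ?thesis
    unfolding artin_reducible_def
    by (intro exI[of _ "- r"] exI[of _ "- q"]) (simp add: poly_in_uminus in_esym_ideal_uminus)
qed

lemma artin_reducible_diff: "artin_reducible n p \<Longrightarrow> artin_reducible n p' \<Longrightarrow> artin_reducible n (p - p')"
  using artin_reducible_add[of n p "- p'"] artin_reducible_uminus by simp

lemma artin_reducible_if_in_esym_ideal: "in_esym_ideal n q \<Longrightarrow> artin_reducible n q"
  unfolding artin_reducible_def by (intro exI[of _ 0] exI[of _ q]) simp

lemma artin_reducible_sum:
  "(\<And>i. i \<in> A \<Longrightarrow> artin_reducible n (f i)) \<Longrightarrow> artin_reducible n (\<Sum>i\<in>A. f i)"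
  by (induction A rule: infinite_finite_induct)
    (auto intro: artin_reducible_add artin_reducible_if_in_esym_ideal in_esym_ideal_0)

lemma artin_reducible_keys:
  assumes "\<And>b c. Q b \<Longrightarrow> artin_reducible n (single b c)" and "\<forall>b\<in>keys p. Q b"
  shows "artin_reducible n p"
  by (rule poly_mapping_induct_keys[where Q=Q and P="artin_reducible n"])
    (use assms in \<open>auto intro: artin_reducible_add artin_reducible_if_in_esym_ideal in_esym_ideal_0\<close>)

text \<open>Since \<open>h\<^sub>d(x\<^sub>1,\<dots>,x\<^bsub>k+1\<^esub>)\<close> lies in the ideal for \<open>d = n - k\<close>, this identity
  lowers the exponent of \<open>x\<^bsub>k+1\<^esub>\<close> modulo the ideal, at the price of factors in
  \<open>x\<^sub>1,\<dots>,x\<^sub>k\<close> only.\<close>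
lemma single_eq_hsym_mult_minus:
  assumes "d \<le> lookup a (X (Suc k))"
  shows "single a c = single (a - single (X (Suc k)) d) c * hsym (Suc k) d
    - (\<Sum>i=1..d. single (a - single (X (Suc k)) i) c * hsym k i)"
proof -
  let ?x = "pvar (X (Suc k))"
  have "a - single (X (Suc k)) d + single (X (Suc k)) (d - i) = a - single (X (Suc k)) i"
    if "i \<le> d" for i
    using that assms
    by (intro poly_mapping_eqI) (auto simp: lookup_add lookup_minus lookup_single when_def)
  then have shift:
    "single (a - single (X (Suc k)) d) c * ?x ^ (d - i) = single (a - single (X (Suc k)) i) c"
    if "i \<le> d" for i
    using that by (simp add: pvar_power mult_single)
  have "(\<Sum>i=1..d. single (a - single (X (Suc k)) d) c * (hsym k i * ?x ^ (d - i)))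
      = (\<Sum>i=1..d. single (a - single (X (Suc k)) i) c * hsym k i)"
  proof (rule sum.cong)
    fix i assume "i \<in> {1..d}"
    then show "single (a - single (X (Suc k)) d) c * (hsym k i * ?x ^ (d - i))
        = single (a - single (X (Suc k)) i) c * hsym k i"
      by (subst mult.left_commute) (simp add: shift mult.commute[of "hsym k i"])
  qed simp
  moreover have "single (a - single (X (Suc k)) d) c * ?x ^ d = single a c"
    using shift[of 0] by simp
  ultimately show ?thesis
    unfolding hsym_Suc_eq_power_plus distrib_left sum_distrib_left by simp
qed

lemma keys_single_mult_hsym:
  assumes "keys a \<subseteq> xlam_vars n" and "Suc k \<le> n" and "1 \<le> i" and "i \<le> lookup a (X (Suc k))"
    and "e \<in> keys (single (a - single (X (Suc k)) i) c * hsym k i)"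
  shows "lookup e (X (Suc k)) < lookup a (X (Suc k))" and "keys e \<subseteq> xlam_vars n"
    and "\<And>j. Suc k < j \<Longrightarrow> lookup e (X j) = lookup a (X j)"
proof -
  let ?a = "a - single (X (Suc k)) i"
  obtain b e' where e: "e = b + e'" "b \<in> keys (single ?a c)" "e' \<in> keys (hsym k i)"
    using assms(5) keys_mult by blast
  have e'_keys_X: "keys e' \<subseteq> X ` {1..k}"
    using e(3) poly_in_hsym[of k i] by (auto simp: poly_in_def)
  then have e'_X: "lookup e' (X j) = 0" if "k < j" for j
    using that by (auto simp: in_keys_iff)
  have e'_keys: "keys e' \<subseteq> xlam_vars n"
    using e'_keys_X assms(2) by (auto simp: xlam_vars_def)
  have "b = ?a" using e(2) by (cases "c = 0") auto
  then show "lookup e (X (Suc k)) < lookup a (X (Suc k))"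
    and "\<And>j. Suc k < j \<Longrightarrow> lookup e (X j) = lookup a (X j)"
    using assms(3,4) e'_X by (simp_all add: e(1) lookup_add lookup_minus lookup_single)
  have "keys ?a \<subseteq> xlam_vars n"
    using assms(1) by (auto simp: in_keys_iff lookup_minus)
  then show "keys e \<subseteq> xlam_vars n"
    using keys_add[of b e'] e'_keys \<open>b = ?a\<close> e(1) by blast
qed

lemma artin_reducible_lower_exponent:
  assumes "Suc k \<le> n" and "n - k \<le> lookup a (X (Suc k))" and "keys a \<subseteq> xlam_vars n"
    and lower: "\<And>e c. lookup e (X (Suc k)) < lookup a (X (Suc k)) \<Longrightarrow> keys e \<subseteq> xlam_vars n
      \<Longrightarrow> \<forall>j\<in>{Suc k<..n}. lookup e (X j) = lookup a (X j) \<Longrightarrow> artin_reducible n (single e c)"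
  shows "artin_reducible n (single a c)"
proof -
  let ?d = "n - k" and ?a = "\<lambda>i. a - single (X (Suc k)) i"
  have "keys (?a ?d) \<subseteq> xlam_vars n"
    using assms(3) by (auto simp: in_keys_iff lookup_minus)
  then have in_ideal: "artin_reducible n (single (?a ?d) c * hsym (Suc k) ?d)"
    using assms(1)
    by (intro artin_reducible_if_in_esym_ideal in_esym_ideal_mult poly_in_single hsym_in_esym_ideal)
      auto
  have "artin_reducible n (single (?a i) c * hsym k i)" if "i \<in> {1..?d}" for i
  proof (rule artin_reducible_keys[where Q="\<lambda>e. lookup e (X (Suc k)) < lookup a (X (Suc k))
        \<and> keys e \<subseteq> xlam_vars n \<and> (\<forall>j\<in>{Suc k<..n}. lookup e (X j) = lookup a (X j))"])
    have "1 \<le> i" and "i \<le> lookup a (X (Suc k))"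
      using that assms(2) by auto
    note exps = keys_single_mult_hsym[OF assms(3,1) this]
    show "\<forall>e\<in>keys (single (?a i) c * hsym k i). lookup e (X (Suc k)) < lookup a (X (Suc k))
        \<and> keys e \<subseteq> xlam_vars n \<and> (\<forall>j\<in>{Suc k<..n}. lookup e (X j) = lookup a (X j))"
      using exps by simp
  qed (use lower in blast)
  then have lower_sum: "artin_reducible n (\<Sum>i=1..?d. single (?a i) c * hsym k i)"
    by (rule artin_reducible_sum)
  have "single a c = single (?a ?d) c * hsym (Suc k) ?d - (\<Sum>i=1..?d. single (?a i) c * hsym k i)"
    using assms(2) by (rule single_eq_hsym_mult_minus)
  then show ?thesis
    using artin_reducible_diff[OF in_ideal lower_sum] by simp
qed

lemma artin_reducible_step:
  assumes "Suc k \<le> n"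
    and IH: "\<And>a c. keys a \<subseteq> xlam_vars n \<Longrightarrow> (\<forall>j\<in>{k<..n}. lookup a (X j) \<le> n - j)
      \<Longrightarrow> artin_reducible n (single a c)"
  shows "keys a \<subseteq> xlam_vars n \<Longrightarrow> (\<forall>j\<in>{Suc k<..n}. lookup a (X j) \<le> n - j)
    \<Longrightarrow> artin_reducible n (single a c)"
proof (induction "lookup a (X (Suc k))" arbitrary: a c rule: less_induct)
  case less
  show ?case
  proof (cases "lookup a (X (Suc k)) \<le> n - Suc k")
    case True
    have "\<forall>j\<in>{k<..n}. lookup a (X j) \<le> n - j"
    proof
      fix j assume "j \<in> {k<..n}"
      then consider "j = Suc k" | "j \<in> {Suc k<..n}" by fastforce
      then show "lookup a (X j) \<le> n - j"
        using True less.prems(2) by cases auto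
    qed
    then show ?thesis by (rule IH[OF less.prems(1)])
  next
    case False
    show ?thesis
    proof (rule artin_reducible_lower_exponent[OF assms(1) _ less.prems(1)])
      show "n - k \<le> lookup a (X (Suc k))"
        using False assms(1) by linarith
      show "artin_reducible n (single e c')"
        if "lookup e (X (Suc k)) < lookup a (X (Suc k))" and "keys e \<subseteq> xlam_vars n"
          and "\<forall>j\<in>{Suc k<..n}. lookup e (X j) = lookup a (X j)" for e c'
        using that less.prems(2) by (intro less.hyps) auto
    qed
  qed
qed

lemma artin_reducible_all:
  assumes "poly_in (xlam_vars n) p"
  shows "artin_reducible n p"
proof -
  have bounded: "artin_reducible n (single a c)"
    if "k \<le> n" "keys a \<subseteq> xlam_vars n" "\<forall>j\<in>{k<..n}. lookup a (X j) \<le> n - j" for k a c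
    using that
  proof (induction k arbitrary: a c)
    case 0
    then have "artin_exp n a" by (simp add: artin_exp_def)
    then show ?case
      using 0 unfolding artin_reducible_def
      by (intro exI[of _ "single a c"] exI[of _ 0]) (simp add: poly_in_single in_esym_ideal_0)
  next
    case (Suc k)
    show ?case
    proof (rule artin_reducible_step)
      show "artin_reducible n (single a' c')"
        if "keys a' \<subseteq> xlam_vars n" and "\<forall>j\<in>{k<..n}. lookup a' (X j) \<le> n - j" for a' c'
        using Suc.prems(1) that by (intro Suc.IH) auto
    qed (use Suc.prems in simp_all)
  qed
  show ?thesis
  proof (rule artin_reducible_keys[where Q="\<lambda>b. keys b \<subseteq> xlam_vars n"])
    show "artin_reducible n (single b c)" if "keys b \<subseteq> xlam_vars n" for b c
      using bounded[of n b c] that by simp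
  qed (use assms in \<open>simp add: poly_in_def\<close>)
qed

section \<open>Triangularity\<close>

definition xlex_gt :: "nat \<Rightarrow> (var \<Rightarrow>\<^sub>0 nat) \<Rightarrow> (var \<Rightarrow>\<^sub>0 nat) \<Rightarrow> bool" where
  "xlex_gt n a b \<longleftrightarrow>
     (\<exists>k\<in>{1..n}. lookup a (X k) > lookup b (X k) \<and> (\<forall>j\<in>{k<..n}. lookup a (X j) = lookup b (X j)))"

lemma xlex_gt_irrefl: "\<not> xlex_gt n a a"
  by (auto simp: xlex_gt_def)

lemma xlex_gt_add_right: "xlex_gt n a b \<Longrightarrow> xlex_gt n (a + c) (b + c)"
  by (auto simp: xlex_gt_def lookup_add)

lemma xlex_gt_add_left: "xlex_gt n a b \<Longrightarrow> xlex_gt n (c + a) (c + b)"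
  using xlex_gt_add_right[of n a b c] by (simp add: add.commute)

lemma xlex_gt_trans:
  assumes "xlex_gt n a b" and "xlex_gt n b c"
  shows "xlex_gt n a c"
proof -
  obtain k where k: "k \<in> {1..n}" "lookup a (X k) > lookup b (X k)"
    "\<forall>j\<in>{k<..n}. lookup a (X j) = lookup b (X j)"
    using assms(1) by (auto simp: xlex_gt_def)
  obtain l where l: "l \<in> {1..n}" "lookup b (X l) > lookup c (X l)"
    "\<forall>j\<in>{l<..n}. lookup b (X j) = lookup c (X j)"
    using assms(2) by (auto simp: xlex_gt_def)
  show ?thesis
    unfolding xlex_gt_def
  proof (intro bexI[of _ "max k l"] conjI ballI)
    show "lookup a (X (max k l)) > lookup c (X (max k l))"
      using k l by (cases k l rule: linorder_cases) (auto simp: max_def)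
    show "lookup a (X j) = lookup c (X j)" if "j \<in> {max k l<..n}" for j
      using k l that by auto
  qed (use k l in auto)
qed

lemma xlex_gt_diff_add:
  assumes "xlex_gt n e u" and "\<forall>v. lookup c v \<le> lookup e v" and "\<forall>v. lookup c v \<le> lookup u v"
  shows "xlex_gt n (e - c + b) (u - c + b)"
proof -
  obtain k where k: "k \<in> {1..n}" "lookup e (X k) > lookup u (X k)"
    "\<forall>j\<in>{k<..n}. lookup e (X j) = lookup u (X j)"
    using assms(1) unfolding xlex_gt_def by blast
  then have "xlex_gt n (e - c) (u - c)"
    unfolding xlex_gt_def using assms(3)
    by (intro bexI[of _ k] conjI) (auto simp: lookup_minus intro: diff_less_mono)
  then show ?thesis by (rule xlex_gt_add_right)
qed

lemma exists_xlex_maximal: "finite S \<Longrightarrow> S \<noteq> {} \<Longrightarrow> \<exists>x\<in>S. \<forall>y\<in>S. \<not> xlex_gt n y x"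
proof (induction S rule: finite_ne_induct)
  case (singleton x)
  then show ?case by (simp add: xlex_gt_irrefl)
next
  case (insert x S)
  then obtain m where m: "m \<in> S" "\<forall>y\<in>S. \<not> xlex_gt n y m" by blast
  show ?case
  proof (cases "xlex_gt n x m")
    case True
    then show ?thesis
      using m xlex_gt_trans xlex_gt_irrefl by (intro bexI[of _ x]) blast+
  qed (use m in auto)
qed

definition least_term :: "nat \<Rightarrow> mpoly \<Rightarrow> (var \<Rightarrow>\<^sub>0 nat) \<Rightarrow> bool" where
  "least_term n p u \<longleftrightarrow> lookup p u = 1 \<and> (\<forall>e\<in>keys p. e = u \<or> xlex_gt n e u)"

lemma xlex_gt_keys_mult:
  assumes "\<forall>e\<in>keys p. xlex_gt n e u" and "\<forall>e\<in>keys q. e = v \<or> xlex_gt n e v"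
  shows "\<forall>e\<in>keys (p * q). xlex_gt n e (u + v)"
proof
  fix e assume "e \<in> keys (p * q)"
  then obtain e1 e2 where e: "e = e1 + e2" "e1 \<in> keys p" "e2 \<in> keys q"
    using keys_mult by blast
  then have "xlex_gt n (e1 + e2) (u + e2)"
    using assms(1) xlex_gt_add_right by blast
  moreover have "e2 = v \<or> xlex_gt n (u + e2) (u + v)"
    using assms(2) e(3) xlex_gt_add_left by blast
  ultimately show "xlex_gt n e (u + v)"
    using e(1) xlex_gt_trans by auto
qed

lemma least_term_mult:
  assumes p: "least_term n p u" and q: "least_term n q v"
  shows "least_term n (p * q) (u + v)"
proof -
  define p' where "p' = p - single u 1"
  define q' where "q' = q - single v 1"
  have p': "\<forall>e\<in>keys p'. xlex_gt n e u"
    using p by (auto simp: least_term_def p'_def in_keys_iff lookup_minus lookup_single when_def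
        split: if_splits)
  have q': "\<forall>e\<in>keys q'. xlex_gt n e v"
    using q by (auto simp: least_term_def q'_def in_keys_iff lookup_minus lookup_single when_def
        split: if_splits)
  have pq: "p * q = single (u + v) 1 + (q' * single u 1 + p' * q)"
    by (simp add: p'_def q'_def algebra_simps mult_single)
  have "\<forall>e\<in>keys (q' * single u 1). xlex_gt n e (v + u)"
    by (rule xlex_gt_keys_mult) (use q' in auto)
  moreover have "\<forall>e\<in>keys (p' * q). xlex_gt n e (u + v)"
    by (rule xlex_gt_keys_mult) (use p' q in \<open>auto simp: least_term_def\<close>)
  ultimately have higher: "\<forall>e\<in>keys (q' * single u 1 + p' * q). xlex_gt n e (u + v)"
    using keys_add[of "q' * single u 1" "p' * q"] by (auto simp: add.commute)
  then have "u + v \<notin> keys (q' * single u 1 + p' * q)"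
    using xlex_gt_irrefl by blast
  then have "lookup (q' * single u 1 + p' * q) (u + v) = 0"
    by (simp add: in_keys_iff)
  then show ?thesis
    unfolding least_term_def pq
    using higher keys_add[of "single (u + v) 1" "q' * single u 1 + p' * q"]
    by (auto simp: lookup_add)
qed

definition vandermonde_pairs :: "nat \<Rightarrow> (nat \<times> nat) set" where
  "vandermonde_pairs n = {(i, j). 1 \<le> i \<and> i < j \<and> j \<le> n}"

lemma finite_vandermonde_pairs: "finite (vandermonde_pairs n)"
  by (rule finite_subset[of _ "{1..n} \<times> {1..n}"]) (auto simp: vandermonde_pairs_def)

lemma Vandermonde_eq_prod_pairs:
  "Vandermonde n = (\<Prod>p\<in>vandermonde_pairs n. pvar (X (fst p)) - pvar (X (snd p)))"
  unfolding Vandermonde_def vandermonde_pairs_def by (rule prod.cong) auto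

definition staircase :: "nat \<Rightarrow> (var \<Rightarrow>\<^sub>0 nat)" where
  "staircase n = (\<Sum>p\<in>vandermonde_pairs n. var_exp (X (fst p)))"

lemma least_term_Vandermonde: "least_term n (Vandermonde n) (staircase n)"
proof -
  have factor: "least_term n (pvar (X i) - pvar (X j)) (var_exp (X i))"
    if "(i, j) \<in> vandermonde_pairs n" for i j
  proof -
    have "xlex_gt n (var_exp (X j)) (var_exp (X i))"
      using that unfolding xlex_gt_def vandermonde_pairs_def
      by (intro bexI[of _ j]) (auto simp: lookup_var_exp)
    moreover have "lookup (var_exp (X i)) (X i) \<noteq> lookup (var_exp (X j)) (X i)"
      using that by (auto simp: vandermonde_pairs_def lookup_var_exp)
    then have "var_exp (X i) \<noteq> var_exp (X j)"
      by metis
    ultimately show ?thesis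
      by (auto simp: least_term_def pvar_eq_single lookup_minus lookup_single in_keys_iff when_def
          split: if_splits)
  qed
  have "least_term n (\<Prod>p\<in>S. pvar (X (fst p)) - pvar (X (snd p))) (\<Sum>p\<in>S. var_exp (X (fst p)))"
    if "finite S" "S \<subseteq> vandermonde_pairs n" for S
    using that
  proof (induction S rule: finite_induct)
    case (insert x S)
    then show ?case using factor[of "fst x" "snd x"] by (simp add: least_term_mult)
  qed (simp add: least_term_def)
  then show ?thesis
    unfolding Vandermonde_eq_prod_pairs staircase_def using finite_vandermonde_pairs by simp
qed

lemma lookup_staircase: "lookup (staircase n) v = (case v of X i \<Rightarrow> if 1 \<le> i then n - i else 0 | _ \<Rightarrow> 0)"
proof -
  have "lookup (staircase n) v = card {p \<in> vandermonde_pairs n. X (fst p) = v}"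
    by (simp add: staircase_def lookup_sum lookup_var_exp sum.If_cases finite_vandermonde_pairs
        Int_def conj_commute)
  also have "\<dots> = (case v of X i \<Rightarrow> if 1 \<le> i then n - i else 0 | _ \<Rightarrow> 0)"
  proof (cases v)
    case (X i)
    have "{p \<in> vandermonde_pairs n. X (fst p) = v} = (if 1 \<le> i then (\<lambda>j. (i, j)) ` {i<..n} else {})"
      using X by (auto simp: vandermonde_pairs_def)
    then show ?thesis using X by (simp add: card_image inj_on_def)
  qed auto
  finally show ?thesis .
qed

lemma Delta_module_mderiv:
  "keys c \<subseteq> X ` {1..n} \<Longrightarrow> mderiv c (Vandermonde n) \<in> Delta_module n"
proof (induction c rule: exp_induct)
  case zero
  then show ?case by (simp add: mderiv_0 Delta_module_Vandermonde)
next
  case (add_var c v)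
  then show ?case by (auto simp: mderiv_add_var_exp intro: Delta_module_pd_X)
qed

lemma Delta_module_single_mult:
  assumes "keys b \<subseteq> Lam ` {1..n-1}" and "w \<in> Delta_module n"
  shows "single b 1 * w \<in> Delta_module n"
  using assms(1)
proof (induction b rule: exp_induct)
  case zero
  then show ?case using assms(2) by simp
next
  case (add_var b v)
  then obtain k where "v = Lam k" "k \<in> {1..n-1}" by auto
  moreover have "single (b + var_exp v) 1 * w = pvar v * (single b 1 * w)"
    by (simp add: single_add_var_exp mult_ac)
  ultimately show ?case
    using add_var by (simp add: Delta_module_Lam_mult)
qed

lemma lookup_single_mult:
  fixes c :: "'v \<Rightarrow>\<^sub>0 nat" and p :: "('v \<Rightarrow>\<^sub>0 nat) \<Rightarrow>\<^sub>0 'b::comm_semiring_1"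
  shows "lookup (single c x * p) e = (if \<forall>v. lookup c v \<le> lookup e v then x * lookup p (e - c) else 0)"
proof (induction p rule: poly_mapping_induct)
  case (2 a y)
  show ?case using exp_add_eq_iff[of c a e] by (auto simp: mult_single lookup_single when_def)
qed (simp_all add: distrib_left lookup_add)

lemma fischer_least_term:
  assumes "least_term n D u" and "\<And>e. xlex_gt n e u \<Longrightarrow> lookup p e = 0"
  shows "fischer p D = lookup p u * of_nat (exp_fact u)"
proof -
  have u: "u \<in> keys D" and D: "lookup D u = 1" "\<forall>e\<in>keys D. e = u \<or> xlex_gt n e u"
    using assms(1) by (auto simp: least_term_def in_keys_iff)
  have "fischer p D = (\<Sum>e\<in>keys D. lookup p e * lookup D e * of_nat (exp_fact e))"
    by (rule fischer_superset') auto
  also have "\<dots> = lookup p u * lookup D u * of_nat (exp_fact u)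
      + (\<Sum>e\<in>keys D - {u}. lookup p e * lookup D e * of_nat (exp_fact e))"
    by (rule sum.remove[OF finite_keys u])
  also have "(\<Sum>e\<in>keys D - {u}. lookup p e * lookup D e * of_nat (exp_fact e)) = 0"
    using D(2) assms(2) by (intro sum.neutral) auto
  finally show ?thesis using D(1) by simp
qed

text \<open>With truncated subtraction, \<open>staircase n - m\<close> is \<open>\<delta>\<close> minus the \<open>x\<close>-part of \<open>m\<close>,
  and \<open>m - staircase n\<close> is the \<open>\<lambda>\<close>-part of \<open>m\<close>.\<close>
lemma staircase_decomp:
  assumes "keys m \<subseteq> xlam_vars n" and "artin_exp n m"
  shows "keys (staircase n - m) \<subseteq> X ` {1..n}" and "keys (m - staircase n) \<subseteq> Lam ` {1..n-1}"
    and "staircase n - (staircase n - m) + (m - staircase n) = m"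
proof -
  have m_X: "lookup m (X j) \<le> lookup (staircase n) (X j)" for j
  proof (cases "j \<in> {1..n}")
    case False
    then have "X j \<notin> keys m" using assms(1) by (auto simp: xlam_vars_def)
    then show ?thesis by (simp add: in_keys_iff)
  qed (use assms(2) in \<open>simp add: artin_exp_def lookup_staircase\<close>)
  show "keys (staircase n - m) \<subseteq> X ` {1..n}"
    by (auto simp: in_keys_iff lookup_minus lookup_staircase split: var.splits if_splits)
  show "keys (m - staircase n) \<subseteq> Lam ` {1..n-1}"
  proof
    fix v assume v: "v \<in> keys (m - staircase n)"
    then have "v \<in> keys m" and "v \<notin> range X"
      using m_X by (auto simp: in_keys_iff lookup_minus)
    then show "v \<in> Lam ` {1..n-1}" using assms(1) by (auto simp: xlam_vars_def)
  qed
  show "staircase n - (staircase n - m) + (m - staircase n) = m"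
    by (rule poly_mapping_eqI) (simp add: lookup_add lookup_minus)
qed

lemma Delta_module_fischer_ne_0:
  assumes "r \<noteq> 0" and r: "poly_in (xlam_vars n) r" and artin: "\<forall>a\<in>keys r. artin_exp n a"
  shows "\<exists>w\<in>Delta_module n. fischer r w \<noteq> 0"
proof -
  obtain m where m: "m \<in> keys r" "\<forall>e\<in>keys r. \<not> xlex_gt n e m"
    using exists_xlex_maximal[of "keys r" n] assms(1) by auto
  define c b where "c = staircase n - m" and "b = m - staircase n"
  note decomp = staircase_decomp[of m n, folded c_def b_def]
  have m_eq: "staircase n - c + b = m"
    using decomp(3) m r artin by (auto simp: poly_in_def)
  have c_le: "\<forall>v. lookup c v \<le> lookup (staircase n) v"
    by (simp add: c_def lookup_minus)
  define w where "w = single b 1 * mderiv c (Vandermonde n)"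
  have "w \<in> Delta_module n"
    unfolding w_def using decomp m r artin
    by (intro Delta_module_single_mult Delta_module_mderiv) (auto simp: poly_in_def)
  have "fischer r w = fischer (single c 1 * mderiv b r) (Vandermonde n)"
    by (simp add: w_def fischer_single_mult_right fischer_mderiv_right)
  also have "\<dots> = lookup r m * deriv_coeff m b * of_nat (exp_fact (staircase n))"
  proof (subst fischer_least_term[OF least_term_Vandermonde])
    fix e assume "xlex_gt n e (staircase n)"
    then have "(\<forall>v. lookup c v \<le> lookup e v) \<longrightarrow> xlex_gt n (e - c + b) m"
      using xlex_gt_diff_add[of n e "staircase n" c b] c_le m_eq by simp
    then show "lookup (single c 1 * mderiv b r) e = 0"
      using m(2) by (auto simp: lookup_single_mult lookup_mderiv in_keys_iff)
  qed (use c_le m_eq in \<open>simp add: lookup_single_mult lookup_mderiv\<close>)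
  also have "\<dots> \<noteq> 0"
    using m(1) exp_fact_pos[of "staircase n"]
    by (auto simp: in_keys_iff deriv_coeff_eq_0_iff b_def lookup_minus)
  finally show ?thesis using \<open>w \<in> Delta_module n\<close> by blast
qed

section \<open>Orthogonality of the ideal\<close>

locale var_involution =
  fixes \<tau> :: "var \<Rightarrow> var"
  assumes involutive [simp]: "\<tau> (\<tau> v) = v"
begin

lemma inj: "inj \<tau>"
  by (metis injI involutive)

definition rename_exp :: "(var \<Rightarrow>\<^sub>0 nat) \<Rightarrow> (var \<Rightarrow>\<^sub>0 nat)" where
  "rename_exp a = Poly_Mapping.map_key \<tau> a"

lemma lookup_rename_exp: "lookup (rename_exp a) v = lookup a (\<tau> v)"
  by (simp add: rename_exp_def map_key.rep_eq[OF inj])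

lemma rename_exp_rename_exp [simp]: "rename_exp (rename_exp a) = a"
  by (rule poly_mapping_eqI) (simp add: lookup_rename_exp)

lemma inj_rename_exp: "inj rename_exp"
  by (metis injI rename_exp_rename_exp)

lemma rename_exp_add: "rename_exp (a + b) = rename_exp a + rename_exp b"
  by (rule poly_mapping_eqI) (simp add: lookup_rename_exp lookup_add)

lemma rename_exp_0 [simp]: "rename_exp 0 = 0"
  by (rule poly_mapping_eqI) (simp add: lookup_rename_exp)

lemma keys_rename_exp: "keys (rename_exp a) = \<tau> ` keys a"
proof
  show "keys (rename_exp a) \<subseteq> \<tau> ` keys a"
  proof
    fix v assume "v \<in> keys (rename_exp a)"
    then have "\<tau> v \<in> keys a" by (simp add: in_keys_iff lookup_rename_exp)
    then show "v \<in> \<tau> ` keys a" using image_eqI[of v \<tau> "\<tau> v"] by simp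
  qed
qed (auto simp: in_keys_iff lookup_rename_exp)

lemma exp_fact_rename_exp: "exp_fact (rename_exp a) = exp_fact a"
proof -
  have "exp_fact (rename_exp a) = (\<Prod>v\<in>\<tau> ` keys a. fact (lookup a (\<tau> v)))"
    by (simp add: exp_fact_def keys_rename_exp lookup_rename_exp)
  also have "\<dots> = exp_fact a"
    by (subst prod.reindex) (auto simp: exp_fact_def intro: inj_on_subset[OF inj])
  finally show ?thesis .
qed

definition rename :: "mpoly \<Rightarrow> mpoly" where
  "rename p = Poly_Mapping.map_key rename_exp p"

lemma rename_single: "rename (single a c) = single (rename_exp a) c"
  using map_key_single[OF inj_rename_exp, of "rename_exp a" c] by (simp add: rename_def)

sublocale rename: additive rename
  by unfold_locales (simp add: rename_def map_key_plus[OF inj_rename_exp])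

lemma rename_mult: "rename (p * q) = rename p * rename q"
proof (rule bilinear_eqI[where L="\<lambda>p q. rename (p * q)" and R="\<lambda>p q. rename p * rename q"])
  fix a b :: "var \<Rightarrow>\<^sub>0 nat" and c d :: complex
  show "rename (single a c * single b d) = rename (single a c) * rename (single b d)"
    by (simp add: mult_single rename_single rename_exp_add)
qed (simp_all add: rename.add distrib_left distrib_right)

lemma rename_pvar: "rename (pvar v) = pvar (\<tau> v)"
proof -
  have "rename_exp (var_exp v) = var_exp (\<tau> v)"
    by (rule poly_mapping_eqI) (auto simp: lookup_rename_exp lookup_var_exp)
  then show ?thesis by (simp add: pvar_eq_single rename_single)
qed

lemma rename_1 [simp]: "rename 1 = 1"
  using rename_single[of 0 1] by simp

lemma rename_prod: "rename (\<Prod>i\<in>A. f i) = (\<Prod>i\<in>A. rename (f i))"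
  by (induction A rule: infinite_finite_induct) (simp_all add: rename_mult)

lemma fischer_rename: "fischer (rename f) g = fischer f (rename g)"
proof (rule bilinear_eqI[where L="\<lambda>f g. fischer (rename f) g" and R="\<lambda>f g. fischer f (rename g)"])
  fix a b :: "var \<Rightarrow>\<^sub>0 nat" and c d :: complex
  have "rename_exp a = b \<longleftrightarrow> a = rename_exp b" by auto
  then show "fischer (rename (single a c)) (single b d) = fischer (single a c) (rename (single b d))"
    by (auto simp: rename_single fischer_single exp_fact_rename_exp)
qed (simp_all add: fischer_left.add fischer_right.add rename.add)

end

definition swap_X :: "nat \<Rightarrow> var \<Rightarrow> var" where
  "swap_X s = transpose (X s) (X (Suc s))"

interpretation swap: var_involution "swap_X s" for s
  by unfold_locales (simp add: swap_X_def)

lemma swap_X_apply: "swap_X s v = (if v = X s then X (Suc s) else if v = X (Suc s) then X s else v)"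
  by (simp add: swap_X_def transpose_def)

lemma swap_X_X: "swap_X s (X j) = X (transpose s (Suc s) j)"
  by (simp add: swap_X_def transpose_def)

lemma swap_rename_esym:
  assumes "1 \<le> s" and "Suc s \<le> n"
  shows "swap.rename s (esym n i) = esym n i"
proof -
  let ?t = "transpose s (Suc s)" and ?S = "{S. S \<subseteq> {1..n} \<and> card S = i}"
  have inj_t: "inj_on ?t S" for S
    by (rule inj_on_subset[of _ UNIV]) (auto simp: inj_on_def transpose_eq_iff)
  have t_range: "?t ` {1..n} \<subseteq> {1..n}"
    using assms by (auto simp: transpose_def)
  have image_S: "image ?t ` ?S = ?S"
  proof
    show "image ?t ` ?S \<subseteq> ?S"
      using t_range inj_t by (auto simp: card_image)
    show "?S \<subseteq> image ?t ` ?S"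
    proof
      fix S assume S: "S \<in> ?S"
      then have "?t ` S \<in> ?S" using t_range inj_t by (auto simp: card_image)
      moreover have "S = ?t ` ?t ` S" by (simp add: image_image)
      ultimately show "S \<in> image ?t ` ?S" by blast
    qed
  qed
  have "inj_on (image ?t) ?S"
    by (rule inj_on_subset[of _ UNIV])
      (auto simp: inj_on_def image_image dest: arg_cong[of _ _ "image ?t"])
  then have "swap.rename s (esym n i) = (\<Sum>S\<in>image ?t ` ?S. \<Prod>j\<in>S. pvar (X j))"
    by (simp add: esym_def swap.rename.sum swap.rename_prod swap.rename_pvar swap_X_X
        prod.reindex[OF inj_t] sum.reindex)
  then show ?thesis by (simp only: image_S esym_def)
qed

lemma swap_rename_Vandermonde:
  assumes "1 \<le> s" and "Suc s \<le> n"
  shows "swap.rename s (Vandermonde n) = - Vandermonde n"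
proof -
  define g where "g p = pvar (X (fst p)) - pvar (X (snd p))" for p
  define h where "h p = (transpose s (Suc s) (fst p), transpose s (Suc s) (snd p))" for p
  define R where "R = vandermonde_pairs n - {(s, Suc s)}"
  have hh: "h (h p) = p" for p by (simp add: h_def)
  have hR: "h ` R = R"
  proof
    show "h ` R \<subseteq> R"
      using assms by (auto simp: R_def h_def vandermonde_pairs_def transpose_def split: if_splits)
    then have "h ` h ` R \<subseteq> h ` R" by blast
    then show "R \<subseteq> h ` R" by (simp add: image_image hh)
  qed
  have "(s, Suc s) \<in> vandermonde_pairs n"
    using assms by (simp add: vandermonde_pairs_def)
  then have D: "Vandermonde n = g (s, Suc s) * (\<Prod>p\<in>R. g p)"
    unfolding Vandermonde_eq_prod_pairs g_def[symmetric] R_def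
    by (rule prod.remove[OF finite_vandermonde_pairs])
  have "(\<Prod>p\<in>R. swap.rename s (g p)) = (\<Prod>p\<in>R. g (h p))"
    by (simp add: g_def h_def swap.rename.diff swap.rename_pvar swap_X_X)
  also have "\<dots> = (\<Prod>p\<in>h ` R. g p)"
    by (subst prod.reindex) (auto intro: inj_on_subset[OF inj_on_inverseI[of UNIV h h]] simp: hh)
  finally have "(\<Prod>p\<in>R. swap.rename s (g p)) = (\<Prod>p\<in>R. g p)"
    by (simp only: hR)
  moreover have "swap.rename s (g (s, Suc s)) = - g (s, Suc s)"
    by (simp add: g_def swap.rename.diff swap.rename_pvar swap_X_X)
  ultimately show ?thesis
    by (simp add: D swap.rename_mult swap.rename_prod)
qed

definition homogeneous :: "nat \<Rightarrow> mpoly \<Rightarrow> bool" where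
  "homogeneous d p \<longleftrightarrow> (\<forall>e\<in>keys p. exp_deg e = d)"

lemma homogeneous_mult:
  assumes "homogeneous d p" and "homogeneous d' q"
  shows "homogeneous (d + d') (p * q)"
  unfolding homogeneous_def
proof
  fix m assume "m \<in> keys (p * q)"
  then obtain a b where "m = a + b" "a \<in> keys p" "b \<in> keys q"
    using keys_mult[of p q] by blast
  then show "exp_deg m = d + d'"
    using assms by (simp add: homogeneous_def exp_deg_add)
qed

lemma homogeneous_add: "homogeneous d p \<Longrightarrow> homogeneous d q \<Longrightarrow> homogeneous d (p + q)"
  unfolding homogeneous_def using keys_add[of p q] by blast

lemma homogeneous_diff: "homogeneous d p \<Longrightarrow> homogeneous d q \<Longrightarrow> homogeneous d (p - q)"
  using homogeneous_add[of d p "- q"] by (simp add: homogeneous_def)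

lemma homogeneous_sum:
  "(\<And>i. i \<in> A \<Longrightarrow> homogeneous d (f i)) \<Longrightarrow> homogeneous d (\<Sum>i\<in>A. f i)"
  by (induction A rule: infinite_finite_induct) (simp_all add: homogeneous_add homogeneous_def[of _ 0])

lemma homogeneous_pvar: "homogeneous 1 (pvar v)"
  by (simp add: homogeneous_def pvar_eq_single)

lemma homogeneous_prod_linear:
  "finite S \<Longrightarrow> (\<And>i. i \<in> S \<Longrightarrow> homogeneous 1 (f i)) \<Longrightarrow> homogeneous (card S) (\<Prod>i\<in>S. f i)"
proof (induction S rule: finite_induct)
  case empty
  then show ?case by (simp add: homogeneous_def exp_deg_def)
next
  case (insert x S)
  then have "homogeneous (1 + card S) (f x * (\<Prod>i\<in>S. f i))"
    by (intro homogeneous_mult) auto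
  then show ?case using insert by simp
qed

lemma homogeneous_Vandermonde: "homogeneous (card (vandermonde_pairs n)) (Vandermonde n)"
  unfolding Vandermonde_eq_prod_pairs
  by (rule homogeneous_prod_linear[OF finite_vandermonde_pairs])
    (intro homogeneous_diff homogeneous_pvar)

lemma homogeneous_esym: "homogeneous i (esym n i)"
  unfolding esym_def
proof (rule homogeneous_sum)
  fix S assume "S \<in> {S. S \<subseteq> {1..n} \<and> card S = i}"
  then have "finite S" "card S = i" by (auto dest: finite_subset)
  then show "homogeneous i (\<Prod>j\<in>S. pvar (X j))"
    using homogeneous_prod_linear[of S "\<lambda>j. pvar (X j)"] homogeneous_pvar by simp
qed

lemma sum_lessThan_card_le: "finite A \<Longrightarrow> (\<Sum>k<card A. k) \<le> \<Sum>A"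
proof (induction "card A" arbitrary: A)
  case (Suc m)
  define M where "M = Max A"
  have "A \<noteq> {}" using Suc.hyps(2) by auto
  then have M: "M \<in> A" using Suc.prems by (simp add: M_def)
  have "A \<subseteq> {0..M}" using Suc by (auto simp: M_def)
  then have "m \<le> M" using card_mono[of "{0..M}" A] Suc.hyps(2) by simp
  have "card (A - {M}) = m" using Suc M by simp
  then have "(\<Sum>k<m. k) \<le> \<Sum>(A - {M})" using Suc.hyps(1)[of "A - {M}"] Suc.prems by simp
  moreover have "\<Sum>A = M + \<Sum>(A - {M})" using Suc M by (simp add: sum.remove)
  moreover have "(\<Sum>k<card A. k) = m + (\<Sum>k<m. k)" by (simp flip: Suc.hyps(2))
  ultimately show ?case using \<open>m \<le> M\<close> by simp
qed simp

lemma exp_deg_X_only: "keys a \<subseteq> X ` {1..n} \<Longrightarrow> exp_deg a = (\<Sum>j\<in>{1..n}. lookup a (X j))"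
  by (subst exp_deg_superset[of "X ` {1..n}"]) (auto simp: sum.reindex inj_on_def)

lemma card_vandermonde_pairs: "card (vandermonde_pairs n) = (\<Sum>k<n. k)"
proof -
  have key: "staircase n \<in> keys (Vandermonde n)"
    using least_term_Vandermonde[of n] by (simp add: least_term_def in_keys_iff)
  then have "card (vandermonde_pairs n) = exp_deg (staircase n)"
    using homogeneous_Vandermonde[of n] by (simp add: homogeneous_def)
  also have "\<dots> = (\<Sum>j\<in>{1..n}. n - j)"
    using key poly_in_Vandermonde[of n]
    by (auto simp: poly_in_def exp_deg_X_only lookup_staircase intro!: sum.cong)
  also have "\<dots> = (\<Sum>k<n. k)"
    by (rule sum.reindex_bij_witness[of _ "\<lambda>k. n - k" "\<lambda>j. n - j"]) auto
  finally show ?thesis .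
qed

lemma exists_equal_exps:
  assumes "keys a \<subseteq> X ` {1..n}" and "exp_deg a < card (vandermonde_pairs n)"
  shows "\<exists>j k. 1 \<le> j \<and> j < k \<and> k \<le> n \<and> lookup a (X j) = lookup a (X k)"
proof (rule ccontr)
  assume "\<not> ?thesis"
  then have inj: "inj_on (\<lambda>j. lookup a (X j)) {1..n}"
    by (intro inj_onI) (metis atLeastAtMost_iff linorder_neqE_nat)
  then have "(\<Sum>k<n. k) \<le> (\<Sum>j\<in>{1..n}. lookup a (X j))"
    using sum_lessThan_card_le[of "(\<lambda>j. lookup a (X j)) ` {1..n}"]
    by (simp add: card_image sum.reindex)
  then show False using assms by (simp add: exp_deg_X_only card_vandermonde_pairs)
qed

definition esym_Vandermonde_pairing :: "nat \<Rightarrow> nat \<Rightarrow> (var \<Rightarrow>\<^sub>0 nat) \<Rightarrow> complex" where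
  "esym_Vandermonde_pairing n i a = fischer (single a 1 * esym n i) (Vandermonde n)"

lemma esym_Vandermonde_pairing_swap:
  assumes "1 \<le> s" and "Suc s \<le> n"
  shows "esym_Vandermonde_pairing n i (swap.rename_exp s a) = - esym_Vandermonde_pairing n i a"
proof -
  have "single (swap.rename_exp s a) 1 * esym n i = swap.rename s (single a 1 * esym n i)"
    by (simp add: swap.rename_mult swap.rename_single swap_rename_esym[OF assms])
  then show ?thesis
    by (simp add: esym_Vandermonde_pairing_def swap.fischer_rename swap_rename_Vandermonde[OF assms]
        fischer_right.minus)
qed

lemma esym_Vandermonde_pairing_support:
  assumes "esym_Vandermonde_pairing n i a \<noteq> 0"
  shows "keys a \<subseteq> X ` {1..n}" and "exp_deg a + i = card (vandermonde_pairs n)"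
proof -
  obtain x where x: "x \<in> keys (single a 1 * esym n i)" "x \<in> keys (Vandermonde n)"
    using assms unfolding esym_Vandermonde_pairing_def fischer_def
    by (metis (no_types, lifting) in_keys_iff mult_zero_left mult_zero_right sum.neutral)
  then obtain y where y: "x = a + y" "y \<in> keys (esym n i)"
    using keys_mult[of "single a (1::complex)"] by auto
  have "exp_deg (a + y) = card (vandermonde_pairs n)" and "exp_deg y = i"
    using x(2) y homogeneous_Vandermonde[of n] homogeneous_esym[of i n]
    unfolding homogeneous_def by blast+
  then show "exp_deg a + i = card (vandermonde_pairs n)"
    by (simp add: exp_deg_add)
  show "keys a \<subseteq> X ` {1..n}"
    using x(2) y(1) poly_in_Vandermonde[of n] keys_add_exp[of a y] by (auto simp: poly_in_def)
qed

text \<open>Equal exponents at \<open>x\<^sub>j\<close> and \<open>x\<^sub>k\<close> are moved next to each other by adjacent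
  transpositions, each of which only flips the sign of the pairing; two equal adjacent exponents
  then force the pairing to equal its negative.\<close>
lemma esym_Vandermonde_pairing_equal_exps:
  assumes "1 \<le> j" and "j < k" and "k \<le> n" and "lookup a (X j) = lookup a (X k)"
  shows "esym_Vandermonde_pairing n i a = 0"
  using assms
proof (induction "k - j" arbitrary: a k)
  case (Suc d)
  show ?case
  proof (cases "k = Suc j")
    case True
    have "swap.rename_exp j a = a"
      using Suc.prems True
      by (intro poly_mapping_eqI) (auto simp: swap.lookup_rename_exp swap_X_apply)
    then show ?thesis
      using esym_Vandermonde_pairing_swap[of j n i a] Suc.prems True by simp
  next
    case False
    define s where "s = k - 1"
    have s: "1 \<le> s" "Suc s \<le> n" "j < s" "Suc s = k"
      using Suc.prems False by (auto simp: s_def)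
    have "lookup (swap.rename_exp s a) (X j) = lookup (swap.rename_exp s a) (X s)"
      using s Suc.prems(4) by (simp add: swap.lookup_rename_exp swap_X_X transpose_def)
    then have "esym_Vandermonde_pairing n i (swap.rename_exp s a) = 0"
      using Suc s by (intro Suc.hyps) auto
    then show ?thesis using esym_Vandermonde_pairing_swap[OF s(1,2), of i a] by simp
  qed
qed simp

lemma esym_Vandermonde_pairing_eq_0:
  assumes "i \<in> {1..n}"
  shows "esym_Vandermonde_pairing n i a = 0"
proof (rule ccontr)
  assume nonzero: "esym_Vandermonde_pairing n i a \<noteq> 0"
  then have "keys a \<subseteq> X ` {1..n}" and "exp_deg a < card (vandermonde_pairs n)"
    using esym_Vandermonde_pairing_support[OF nonzero] assms by auto
  then obtain j k where "1 \<le> j" "j < k" "k \<le> n" "lookup a (X j) = lookup a (X k)"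
    using exists_equal_exps by blast
  then show False using nonzero esym_Vandermonde_pairing_equal_exps by blast
qed

lemma fischer_esym_mult_Vandermonde:
  assumes "i \<in> {1..n}"
  shows "fischer (q * esym n i) (Vandermonde n) = 0"
proof -
  have "q * esym n i = (\<Sum>a\<in>keys q. single a (lookup q a)) * esym n i"
    by (simp add: sum_single_lookup)
  also have "\<dots> = (\<Sum>a\<in>keys q. const (lookup q a) * (single a 1 * esym n i))"
    by (simp add: sum_distrib_right mult.assoc[symmetric] const_mult_single)
  finally have "fischer (q * esym n i) (Vandermonde n)
      = (\<Sum>a\<in>keys q. lookup q a * esym_Vandermonde_pairing n i a)"
    by (simp add: fischer_left.sum fischer_const_mult_left esym_Vandermonde_pairing_def)
  then show ?thesis
    using esym_Vandermonde_pairing_eq_0[OF assms] by simp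
qed

lemma fischer_esym_mult_Delta_module:
  assumes "w \<in> Delta_module n" and "i \<in> {1..n}"
  shows "fischer (q * esym n i) w = 0"
  using assms(1)
proof (induction w arbitrary: q rule: Delta_module.induct)
  case Delta_module_Vandermonde
  then show ?case using fischer_esym_mult_Vandermonde[OF assms(2)] by simp
next
  case Delta_module_zero
  then show ?case by (simp add: fischer_right.zero)
next
  case (Delta_module_add p p')
  then show ?case by (simp add: fischer_right.add)
next
  case (Delta_module_const_mult p c)
  then show ?case by (simp add: fischer_const_mult_right)
next
  case (Delta_module_pd_X p j)
  have "fischer (q * esym n i) (pd (X j) p) = fischer ((pvar (X j) * q) * esym n i) p"
    by (simp add: fischer_pd_right mult.assoc)
  then show ?case using Delta_module_pd_X by simp
next
  case (Delta_module_Lam_mult p k)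
  have "poly_in (X ` {1..n}) (esym n i)"
    unfolding esym_def by (intro poly_in_sum poly_in_prod poly_in_pvar) auto
  then have "pd (Lam k) (esym n i) = 0"
    by (rule pd_eq_0_if_poly_in) auto
  then have "fischer (q * esym n i) (pvar (Lam k) * p) = fischer (pd (Lam k) q * esym n i) p"
    by (simp add: fischer_pvar_mult_right pd_mult)
  then show ?case using Delta_module_Lam_mult by simp
qed

lemma fischer_esym_ideal_Delta_module:
  assumes "in_esym_ideal n G" and "w \<in> Delta_module n"
  shows "fischer G w = 0"
proof -
  obtain q where "G = (\<Sum>i=1..n. q i * esym n i)"
    using assms(1) unfolding in_esym_ideal_def by blast
  then show ?thesis
    using fischer_esym_mult_Delta_module[OF assms(2)] by (simp add: fischer_left.sum)
qed

lemma poly_in_Phi: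
  assumes "poly_in (xy_vars n) f"
  shows "poly_in (xlam_vars n) (Phi n f)"
proof -
  have var: "poly_in (xlam_vars n) (phi_subst n v)" if "v \<in> xy_vars n" for v
    using that
    by (auto simp: xy_vars_def xlam_vars_def phi_def intro!: poly_in_pvar poly_in_sum poly_in_mult
        poly_in_power)
  show ?thesis
  proof (rule poly_mapping_induct_keys[where Q="\<lambda>a. keys a \<subseteq> xy_vars n"
        and P="\<lambda>f. poly_in (xlam_vars n) (Phi n f)"])
    show "poly_in (xlam_vars n) (Phi n (single a c))" if "keys a \<subseteq> xy_vars n" for a c
      using that var unfolding subst_single subst_exp_def
      by (intro poly_in_mult poly_in_const poly_in_prod poly_in_power) auto
  qed (use assms in \<open>simp_all add: poly_in_def[of _ f] subst.add subst.zero poly_in_add\<close>)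
qed

lemma in_esym_ideal_iff_orth_Delta_module:
  assumes "poly_in (xlam_vars n) G"
  shows "in_esym_ideal n G \<longleftrightarrow> (\<forall>w\<in>Delta_module n. fischer G w = 0)"
proof
  assume orth: "\<forall>w\<in>Delta_module n. fischer G w = 0"
  obtain r q where rq: "G = r + q" "poly_in (xlam_vars n) r" "\<forall>a\<in>keys r. artin_exp n a"
    "in_esym_ideal n q"
    using artin_reducible_all[OF assms] unfolding artin_reducible_def by blast
  have "fischer r w = 0" if "w \<in> Delta_module n" for w
  proof -
    have "fischer (r + q) w = 0" using orth that rq(1) by simp
    then show ?thesis
      using fischer_esym_ideal_Delta_module[OF rq(4) that] by (simp add: fischer_left.add)
  qed
  then have "r = 0" using Delta_module_fischer_ne_0[OF _ rq(2,3)] by blast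
  then show "in_esym_ideal n G" using rq by simp
qed (use fischer_esym_ideal_Delta_module in blast)

theorem proposition4p4:
  fixes n :: nat and f :: mpoly
  assumes "n \<ge> 1" and "poly_in (xy_vars n) f"
  shows "f \<in> orth (OP n) \<longleftrightarrow> in_esym_ideal n (subst (phi_subst n) f)"
proof -
  show ?thesis
    using orth_OP_iff[OF assms(2)] in_esym_ideal_iff_orth_Delta_module[OF poly_in_Phi[OF assms(2)]]
    by simp
qed

end
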